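(* Let $\theta,\omega\in H^\infty$ be inner functions with $\theta(0)=0$ and $\omega(0)=0$, and let $g\in H^2$ be a multiplier between $\mathcal K_\theta$ and $\mathcal K_\omega$. Let $g_1\in H^2$ be the function with $g=\omega\overline\theta\,\overline{g_1}$ a.e. on $\mathbb T$, and let $X\in\mathcal L(\mathcal K_\theta,\mathcal K_\omega)$ be $Xf=gf$, $f\in\mathcal K_\theta$. Suppose $g_1(0)\neq0$. Let $c\in\mathbb T$ and put $$u=\omega+\frac{1}{\overline{g_1(0)}}(c-\theta)g .$$ Then $u\in\mathcal K_\omega$, and with $T=S_\omega+(\cdot,\overline\chi\omega)u$ we have $XU_{(\theta)c}=TX$.
   Context: $m$ is normalized Lebesgue measure on $\mathbb T$; $H^2$ is the Hardy space of $\mathbb D$, identified with a subspace of $L^2(m)$ via boundary values, with the $L^2(m)$ inner product. $\chi(z)=z$, $\mathbf 1(z)=1$. For inner $\theta$, $\mathcal K_\theta=H^2\ominus\theta H^2$; $S$ is multiplication by $\chi$ on $H^2$ and $S_\theta=P_{\mathcal K_\theta}S|_{\mathcal K_\theta}$. $\overline\chi\theta$ is the function $\zeta\mapsto\overline\zeta\theta(\zeta)$ on $\mathbb T$ (in $\mathcal K_\theta$ when $\theta(0)=0$). $(\cdot,v)u$ is the operator $f\mapsto(f,v)u$. For $\theta(0)=0$, $c\in\mathbb T$: $U_{(\theta)c}=S_\theta+c(\cdot,\overline\chi\theta)\mathbf 1\in\mathcal L(\mathcal K_\theta)$. A function $g\in H^2$ is a multiplier between $\mathcal K_\theta$ and $\mathcal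 K_\omega$ if $gf\in\mathcal K_\omega$ for every $f\in\mathcal K_\theta$ (then $f\mapsto gf$ is bounded, and there exists $g_1\in H^2$ with $g=\omega\overline\theta\,\overline{g_1}$ a.e. on $\mathbb T$). *)

theory Defs
  imports "HOL-Analysis.Analysis"
begin

text \<open>Functions on the unit circle are modelled as functions complex => complex,
  of which only the values on the circle matter; the circle is parametrised by
  t \<mapsto> cis t, t in [0, 2 pi], and the normalised Lebesgue measure m corresponds to
  Lebesgue measure on [0, 2 pi] divided by 2 pi.  Boundary values of H^2 functions
  are identified with the H^2 functions themselves.\<close>

definition circ_ae :: "(complex \<Rightarrow> bool) \<Rightarrow> bool" where
  "circ_ae P \<longleftrightarrow> (AE t in lebesgue. t \<in> {0..2*pi} \<longrightarrow> P (cis t))"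

definition aeq :: "(complex \<Rightarrow> complex) \<Rightarrow> (complex \<Rightarrow> complex) \<Rightarrow> bool" where
  "aeq f g \<longleftrightarrow> circ_ae (\<lambda>z. f z = g z)"

definition L2T :: "(complex \<Rightarrow> complex) \<Rightarrow> bool" where
  "L2T f \<longleftrightarrow> (\<lambda>t. f (cis t)) \<in> borel_measurable lebesgue \<and>
     set_integrable lebesgue {0..2*pi} (\<lambda>t. (cmod (f (cis t)))^2)"

definition ipL2 :: "(complex \<Rightarrow> complex) \<Rightarrow> (complex \<Rightarrow> complex) \<Rightarrow> complex" where
  "ipL2 f g = (LINT t:{0..2*pi}|lebesgue. f (cis t) * cnj (g (cis t))) / (2 * pi)"

definition fourier_coeff :: "(complex \<Rightarrow> complex) \<Rightarrow> int \<Rightarrow> complex" where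
  "fourier_coeff f n = ipL2 f (\<lambda>z. z powi n)"

definition H2 :: "(complex \<Rightarrow> complex) set" where
  "H2 = {f. L2T f \<and> (\<forall>n<0. fourier_coeff f n = 0)}"

definition Hinf :: "(complex \<Rightarrow> complex) set" where
  "Hinf = {f \<in> H2. \<exists>M. circ_ae (\<lambda>z. cmod (f z) \<le> M)}"

text \<open>Value at 0 of (the analytic extension of) an H^2 function.\<close>
definition val0 :: "(complex \<Rightarrow> complex) \<Rightarrow> complex" where
  "val0 f = fourier_coeff f 0"

definition inner_fun :: "(complex \<Rightarrow> complex) \<Rightarrow> bool" where
  "inner_fun \<theta> \<longleftrightarrow> \<theta> \<in> Hinf \<and> circ_ae (\<lambda>z. cmod (\<theta> z) = 1)"

definition Kmod :: "(complex \<Rightarrow> complex) \<Rightarrow> (complex \<Rightarrow> complex) set" where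
  "Kmod \<theta> = {f \<in> H2. \<forall>h\<in>H2. ipL2 f (\<lambda>z. \<theta> z * h z) = 0}"

text \<open>Orthogonal projection onto K_theta (a representative of the a.e. class).\<close>
definition PK :: "(complex \<Rightarrow> complex) \<Rightarrow> (complex \<Rightarrow> complex) \<Rightarrow> (complex \<Rightarrow> complex)" where
  "PK \<theta> f = (SOME p. p \<in> Kmod \<theta> \<and> (\<forall>k\<in>Kmod \<theta>. ipL2 (\<lambda>z. f z - p z) k = 0))"

definition Sc :: "(complex \<Rightarrow> complex) \<Rightarrow> (complex \<Rightarrow> complex) \<Rightarrow> (complex \<Rightarrow> complex)" where
  "Sc \<theta> f = PK \<theta> (\<lambda>z. z * f z)"

definition Uc :: "(complex \<Rightarrow> complex) \<Rightarrow> complex \<Rightarrow> (complex \<Rightarrow> complex) \<Rightarrow> (complex \<Rightarrow> complex)" where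
  "Uc \<theta> c f = (\<lambda>z. Sc \<theta> f z + c * ipL2 f (\<lambda>w. cnj w * \<theta> w))"

definition multiplier :: "(complex \<Rightarrow> complex) \<Rightarrow> (complex \<Rightarrow> complex) \<Rightarrow> (complex \<Rightarrow> complex) \<Rightarrow> bool" where
  "multiplier g \<theta> \<omega> \<longleftrightarrow> g \<in> H2 \<and> (\<forall>f\<in>Kmod \<theta>. (\<lambda>z. g z * f z) \<in> Kmod \<omega>)"

end

(*
  On K_theta the compressed shift is S_theta f = z f - a theta with a = (f, conj(z) theta), so
  U_(theta)c f = z f + a (c - theta).  Both X U f and T X f then equal z g f + a (c - theta) g as
  soon as (g f, conj(z) omega) = conj(g1(0)) a.  This identity, and u in K_omega, follow from
  g = omega conj(theta) conj(g1), from f being orthogonal to theta H^2, and from the mean value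
  identity: the mean over the circle of F G is F(0) G(0) for F, G in H^2.

  The mean value identity is the only analytic input.  It is proved by approximating F in L^2 by
  trigonometric polynomials: indicators of measurable sets are approximated by continuous
  functions on the circle (regularity of Lebesgue measure and Urysohn's lemma), and continuous
  functions by polynomials in Re z and Im z (Stone-Weierstrass).
*)

theory Submission
  imports Defs "HOL-Computational_Algebra.Polynomial"
begin

section \<open>Square integrable functions on the circle\<close>

definition circ_measurable :: "(complex \<Rightarrow> complex) \<Rightarrow> bool" where
  "circ_measurable f \<longleftrightarrow> (\<lambda>t. f (cis t)) \<in> borel_measurable lebesgue"

definition circ_integral :: "(complex \<Rightarrow> complex) \<Rightarrow> complex" where
  "circ_integral F = (LINT t:{0..2*pi}|lebesgue. F (cis t))"

definition circ_sqnorm :: "(complex \<Rightarrow> complex) \<Rightarrow> real" where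
  "circ_sqnorm f = (LINT t:{0..2*pi}|lebesgue. (cmod (f (cis t)))^2)"

lemma ipL2_eq_circ_integral: "ipL2 f g = circ_integral (\<lambda>z. f z * cnj (g z)) / (2*pi)"
  by (simp add: ipL2_def circ_integral_def)

lemma circ_ae_mono: "circ_ae P \<Longrightarrow> (\<And>z. cmod z = 1 \<Longrightarrow> P z \<Longrightarrow> Q z) \<Longrightarrow> circ_ae Q"
  unfolding circ_ae_def by (erule eventually_mono) auto

lemma circ_ae_conj:
  assumes "circ_ae P" "circ_ae Q" shows "circ_ae (\<lambda>z. P z \<and> Q z)"
  using eventually_conj[OF assms[unfolded circ_ae_def]] unfolding circ_ae_def
  by (rule eventually_mono) auto

lemma continuous_imp_lebesgue_measurable:
  "continuous_on UNIV f \<Longrightarrow> f \<in> borel_measurable lebesgue"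
  using continuous_imp_measurable_on_sets_lebesgue[of UNIV f] by simp

lemma circ_measurable_compose:
  "circ_measurable f \<Longrightarrow> continuous_on UNIV g \<Longrightarrow> (\<lambda>t. g (f (cis t))) \<in> borel_measurable lebesgue"
  unfolding circ_measurable_def using measurable_compose[OF _ borel_measurable_continuous_onI] by blast

lemma circ_measurable_add [intro]:
  "circ_measurable f \<Longrightarrow> circ_measurable g \<Longrightarrow> circ_measurable (\<lambda>z. f z + g z)"
  unfolding circ_measurable_def by measurable

lemma circ_measurable_mult [intro]:
  "circ_measurable f \<Longrightarrow> circ_measurable g \<Longrightarrow> circ_measurable (\<lambda>z. f z * g z)"
  unfolding circ_measurable_def by measurable

lemma circ_measurable_cnj [intro]: "circ_measurable f \<Longrightarrow> circ_measurable (\<lambda>z. cnj (f z))"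
  unfolding circ_measurable_def by (rule circ_measurable_compose[unfolded circ_measurable_def])
    (auto intro: continuous_intros)

lemma circ_measurable_const [intro]: "circ_measurable (\<lambda>z. c)"
  unfolding circ_measurable_def by measurable

lemma circ_measurable_id [intro]: "circ_measurable (\<lambda>z. z)"
  unfolding circ_measurable_def by (intro continuous_imp_lebesgue_measurable continuous_intros)

lemma circ_measurable_set_borel_measurable:
  "circ_measurable F \<Longrightarrow> set_borel_measurable lebesgue {0..2*pi} (\<lambda>t. F (cis t))"
  unfolding circ_measurable_def set_borel_measurable_def
  by (intro borel_measurable_scaleR borel_measurable_indicator) auto

lemma L2T_circ_measurable: "L2T f \<Longrightarrow> circ_measurable f"
  by (simp add: L2T_def circ_measurable_def)

lemma L2T_sq_integrable: "L2T f \<Longrightarrow> set_integrable lebesgue {0..2*pi} (\<lambda>t. (cmod (f (cis t)))^2)"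
  by (simp add: L2T_def)

lemma L2T_circ_cong: "L2T f \<Longrightarrow> (\<And>z. cmod z = 1 \<Longrightarrow> f z = f' z) \<Longrightarrow> L2T f'"
  unfolding L2T_def by simp

lemma L2T_I:
  assumes "circ_measurable h" "set_integrable lebesgue {0..2*pi} G"
    and "AE t in lebesgue. t \<in> {0..2*pi} \<longrightarrow> (cmod (h (cis t)))^2 \<le> G t"
  shows "L2T h"
  unfolding L2T_def
proof
  show "(\<lambda>t. h (cis t)) \<in> borel_measurable lebesgue"
    using assms(1) by (simp add: circ_measurable_def)
  show "set_integrable lebesgue {0..2*pi} (\<lambda>t. (cmod (h (cis t)))\<^sup>2)"
  proof (rule set_integrable_bound[OF assms(2)])
    show "set_borel_measurable lebesgue {0..2 * pi} (\<lambda>t. (cmod (h (cis t)))\<^sup>2)"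
      using assms(1) unfolding set_borel_measurable_def
      by (intro borel_measurable_scaleR borel_measurable_indicator circ_measurable_compose)
         (auto intro: continuous_intros)
    show "AE t in lebesgue. t \<in> {0..2 * pi} \<longrightarrow> norm ((cmod (h (cis t)))\<^sup>2) \<le> norm (G t)"
      using assms(3) by eventually_elim auto
  qed
qed

lemma L2T_add [intro]:
  assumes "L2T f" "L2T g" shows "L2T (\<lambda>z. f z + g z)"
proof (rule L2T_I)
  show "circ_measurable (\<lambda>z. f z + g z)" using assms by (auto intro: L2T_circ_measurable)
  show "set_integrable lebesgue {0..2*pi} (\<lambda>t. 2 * (cmod (f (cis t)))^2 + 2 * (cmod (g (cis t)))^2)"
    using assms by (intro set_integral_add set_integrable_mult_right L2T_sq_integrable)
  have "(cmod (a + b))^2 \<le> 2 * (cmod a)^2 + 2 * (cmod b)^2" for a b :: complex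
  proof -
    have "(cmod (a + b))^2 \<le> (cmod a + cmod b)^2" by (intro power_mono norm_triangle_ineq) auto
    also have "\<dots> \<le> 2 * (cmod a)^2 + 2 * (cmod b)^2"
      using sum_squares_bound[of "cmod a" "cmod b"] by (simp add: power2_sum)
    finally show ?thesis .
  qed
  then show "AE t in lebesgue. t \<in> {0..2*pi} \<longrightarrow>
      (cmod (f (cis t) + g (cis t)))^2 \<le> 2 * (cmod (f (cis t)))^2 + 2 * (cmod (g (cis t)))^2"
    by simp
qed

lemma L2T_ae_bounded_mult:
  assumes "circ_measurable h" "L2T f" "circ_ae (\<lambda>z. cmod (h z) \<le> M)"
  shows "L2T (\<lambda>z. h z * f z)"
proof (rule L2T_I)
  show "circ_measurable (\<lambda>z. h z * f z)" using assms by (auto intro: L2T_circ_measurable)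
  show "set_integrable lebesgue {0..2*pi} (\<lambda>t. M^2 * (cmod (f (cis t)))^2)"
    using assms by (intro set_integrable_mult_right L2T_sq_integrable)
  show "AE t in lebesgue. t \<in> {0..2*pi} \<longrightarrow>
      (cmod (h (cis t) * f (cis t)))^2 \<le> M^2 * (cmod (f (cis t)))^2"
    using assms(3) unfolding circ_ae_def
  proof eventually_elim
    case (elim t)
    then show ?case
      by (auto simp: norm_mult power_mult_distrib intro!: mult_right_mono power_mono)
  qed
qed

lemma L2T_bounded_mult:
  "circ_measurable h \<Longrightarrow> L2T f \<Longrightarrow> (\<And>z. cmod z = 1 \<Longrightarrow> cmod (h z) \<le> M) \<Longrightarrow> L2T (\<lambda>z. h z * f z)"
  by (rule L2T_ae_bounded_mult[where M = M]) (auto simp: circ_ae_def)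

lemma L2T_const [intro]: "L2T (\<lambda>z. c)"
proof (rule L2T_I)
  show "set_integrable lebesgue {0..2*pi} (\<lambda>t. (cmod c)^2)"
    by (intro absolutely_integrable_continuous_real continuous_intros)
qed auto

lemma L2T_cmult [intro]: "L2T f \<Longrightarrow> L2T (\<lambda>z. c * f z)"
  by (rule L2T_bounded_mult[where M = "cmod c"]) auto

lemma L2T_diff [intro]: "L2T f \<Longrightarrow> L2T g \<Longrightarrow> L2T (\<lambda>z. f z - g z)"
  using L2T_add[OF _ L2T_cmult, of f g "-1"] by simp

lemma L2T_cnj [intro]: "L2T f \<Longrightarrow> L2T (\<lambda>z. cnj (f z))"
  by (rule L2T_I[where G = "\<lambda>t. (cmod (f (cis t)))^2"]) (auto intro: L2T_circ_measurable L2T_sq_integrable)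

lemma L2T_powi [intro]: "L2T (\<lambda>z. z powi n)"
proof -
  have "circ_measurable (\<lambda>z. z powi n)"
    unfolding circ_measurable_def cis_power_int by (intro continuous_imp_lebesgue_measurable continuous_intros)
  then show ?thesis using L2T_bounded_mult[OF _ L2T_const, of "\<lambda>z. z powi n" 1 1]
    by (simp add: norm_power_int)
qed

lemma L2T_mult_z [intro]: "L2T f \<Longrightarrow> L2T (\<lambda>z. z * f z)"
  by (rule L2T_bounded_mult[where M = 1]) auto

lemma L2T_mult_cnj_z [intro]: "L2T f \<Longrightarrow> L2T (\<lambda>z. cnj z * f z)"
  by (rule L2T_bounded_mult[where M = 1]) auto

lemma L2T_product_integrable:
  assumes "L2T f" "L2T g"
  shows "set_integrable lebesgue {0..2*pi} (\<lambda>t. f (cis t) * cnj (g (cis t)))"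
proof (rule set_integrable_bound)
  show "set_integrable lebesgue {0..2*pi} (\<lambda>t. (cmod (f (cis t)))^2 + (cmod (g (cis t)))^2)"
    using assms by (intro set_integral_add L2T_sq_integrable)
  show "set_borel_measurable lebesgue {0..2 * pi} (\<lambda>t. f (cis t) * cnj (g (cis t)))"
    using assms by (intro circ_measurable_set_borel_measurable[of "\<lambda>z. f z * cnj (g z)", simplified]
      circ_measurable_mult circ_measurable_cnj L2T_circ_measurable)
  have "cmod a * cmod b \<le> (cmod a)\<^sup>2 + (cmod b)\<^sup>2" for a b :: complex
    using sum_squares_bound[of "cmod a" "cmod b"] mult_nonneg_nonneg[OF norm_ge_zero norm_ge_zero, of a b]
    by linarith
  then show "AE t in lebesgue. t \<in> {0..2 * pi} \<longrightarrow>
      norm (f (cis t) * cnj (g (cis t))) \<le> norm ((cmod (f (cis t)))\<^sup>2 + (cmod (g (cis t)))\<^sup>2)"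
    by (simp add: norm_mult)
qed

section \<open>The inner product of \<open>L\<^sup>2(m)\<close>\<close>

lemma circ_integral_cnj: "circ_integral (\<lambda>z. cnj (F z)) = cnj (circ_integral F)"
proof -
  have "(\<lambda>t. indicator {0..2*pi} t *\<^sub>R cnj (F (cis t))) = (\<lambda>t. cnj (indicator {0..2*pi} t *\<^sub>R F (cis t)))"
    by (auto simp: indicator_def)
  then show ?thesis
    unfolding circ_integral_def set_lebesgue_integral_def
    using Bochner_Integration.integral_cnj[where M = lebesgue and f = "\<lambda>t. indicator {0..2*pi} t *\<^sub>R F (cis t)"]
    by simp
qed

lemma ipL2_cnj: "ipL2 g f = cnj (ipL2 f g)"
proof -
  have "circ_integral (\<lambda>z. g z * cnj (f z)) = circ_integral (\<lambda>z. cnj (f z * cnj (g z)))"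
    by (simp add: mult.commute)
  then show ?thesis unfolding ipL2_eq_circ_integral circ_integral_cnj by simp
qed

lemma ipL2_add_left:
  assumes "L2T f1" "L2T f2" "L2T g"
  shows "ipL2 (\<lambda>z. f1 z + f2 z) g = ipL2 f1 g + ipL2 f2 g"
proof -
  have "circ_integral (\<lambda>z. (f1 z + f2 z) * cnj (g z)) =
      circ_integral (\<lambda>z. f1 z * cnj (g z)) + circ_integral (\<lambda>z. f2 z * cnj (g z))"
    using L2T_product_integrable[OF assms(1,3)] L2T_product_integrable[OF assms(2,3)]
    unfolding circ_integral_def by (simp add: distrib_right set_integral_add(2))
  then show ?thesis unfolding ipL2_eq_circ_integral by (simp add: add_divide_distrib)
qed

lemma ipL2_cmult_left: "ipL2 (\<lambda>z. c * f z) g = c * ipL2 f g"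
  unfolding ipL2_def by (simp add: mult.assoc)

lemma ipL2_diff_left:
  assumes "L2T f1" "L2T f2" "L2T g"
  shows "ipL2 (\<lambda>z. f1 z - f2 z) g = ipL2 f1 g - ipL2 f2 g"
proof -
  have "ipL2 (\<lambda>z. f1 z + (-1) * f2 z) g = ipL2 f1 g + ipL2 (\<lambda>z. (-1) * f2 z) g"
    using assms by (intro ipL2_add_left L2T_cmult)
  then show ?thesis using ipL2_cmult_left[of "-1" f2 g] by simp
qed

lemma ipL2_add_right:
  "L2T f \<Longrightarrow> L2T g1 \<Longrightarrow> L2T g2 \<Longrightarrow> ipL2 f (\<lambda>z. g1 z + g2 z) = ipL2 f g1 + ipL2 f g2"
  by (metis complex_cnj_add ipL2_add_left ipL2_cnj)

lemma ipL2_cmult_right: "ipL2 f (\<lambda>z. c * g z) = cnj c * ipL2 f g"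
  by (metis complex_cnj_cnj complex_cnj_mult ipL2_cmult_left ipL2_cnj)

lemma ipL2_diff_right:
  "L2T f \<Longrightarrow> L2T g1 \<Longrightarrow> L2T g2 \<Longrightarrow> ipL2 f (\<lambda>z. g1 z - g2 z) = ipL2 f g1 - ipL2 f g2"
  by (metis complex_cnj_diff ipL2_diff_left ipL2_cnj)

lemma ipL2_circ_cong:
  "(\<And>z. cmod z = 1 \<Longrightarrow> f z * cnj (g z) = f' z * cnj (g' z)) \<Longrightarrow> ipL2 f g = ipL2 f' g'"
  unfolding ipL2_def by simp

lemma ipL2_ae_cong:
  assumes "circ_measurable f" "circ_measurable g" "circ_measurable f'" "circ_measurable g'"
    and "circ_ae (\<lambda>z. f z * cnj (g z) = f' z * cnj (g' z))"
  shows "ipL2 f g = ipL2 f' g'"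
proof -
  have "(LINT t:{0..2*pi}|lebesgue. f (cis t) * cnj (g (cis t))) =
        (LINT t:{0..2*pi}|lebesgue. f' (cis t) * cnj (g' (cis t)))"
  proof (rule set_lebesgue_integral_cong_AE)
    show "(\<lambda>t. f (cis t) * cnj (g (cis t))) \<in> borel_measurable lebesgue"
      "(\<lambda>t. f' (cis t) * cnj (g' (cis t))) \<in> borel_measurable lebesgue"
      using circ_measurable_mult[OF assms(1) circ_measurable_cnj[OF assms(2)]]
        circ_measurable_mult[OF assms(3) circ_measurable_cnj[OF assms(4)]]
      by (simp_all add: circ_measurable_def)
    show "AE t\<in>{0..2*pi} in lebesgue. f (cis t) * cnj (g (cis t)) = f' (cis t) * cnj (g' (cis t))"
      using assms(5) unfolding circ_ae_def by (rule eventually_mono) auto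
  qed auto
  then show ?thesis by (simp add: ipL2_def)
qed

lemma circ_sqnorm_nonneg: "circ_sqnorm f \<ge> 0"
  unfolding circ_sqnorm_def set_lebesgue_integral_def
  by (intro integral_nonneg_AE) (auto simp: indicator_def)

lemma circ_sqnorm_cnj: "circ_sqnorm (\<lambda>z. cnj (f z)) = circ_sqnorm f"
  by (simp add: circ_sqnorm_def)

lemma ipL2_self: "ipL2 f f = of_real (circ_sqnorm f / (2*pi))"
proof -
  have "(\<lambda>z. f z * cnj (f z)) = (\<lambda>z. complex_of_real ((cmod (f z))^2))"
    by (intro ext) (metis complex_norm_square of_real_power)
  then have "ipL2 f f = circ_integral (\<lambda>z. complex_of_real ((cmod (f z))^2)) / (2*pi)"
    unfolding ipL2_eq_circ_integral by simp
  then show ?thesis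
    unfolding circ_integral_def set_integral_complex_of_real circ_sqnorm_def by simp
qed

lemma circ_sqnorm_eq_0:
  assumes "L2T f" "circ_sqnorm f = 0" shows "circ_ae (\<lambda>z. f z = 0)"
proof -
  have i: "integrable lebesgue (\<lambda>t. indicator {0..2*pi} t *\<^sub>R (cmod (f (cis t)))^2)"
    using L2T_sq_integrable[OF assms(1)] by (simp add: set_integrable_def)
  have "AE t in lebesgue. indicator {0..2*pi} t *\<^sub>R (cmod (f (cis t)))^2 = (0::real)"
    using assms(2) integral_nonneg_eq_0_iff_AE[OF i]
    unfolding circ_sqnorm_def set_lebesgue_integral_def by (auto simp: indicator_def)
  then show ?thesis unfolding circ_ae_def by (rule eventually_mono) (auto simp: indicator_def)
qed

lemma norm_ipL2_le:
  assumes a: "L2T a" and b: "L2T b" and s: "s > 0"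
  shows "cmod (ipL2 a b) \<le> (s * circ_sqnorm a + circ_sqnorm b / s) / (4*pi)"
proof -
  define A where "A = (\<lambda>t. indicator {0..2*pi} t *\<^sub>R (cmod (a (cis t)))^2 :: real)"
  define B where "B = (\<lambda>t. indicator {0..2*pi} t *\<^sub>R (cmod (b (cis t)))^2 :: real)"
  have iA: "integrable lebesgue A" using L2T_sq_integrable[OF a] by (simp add: A_def set_integrable_def)
  have iB: "integrable lebesgue B" using L2T_sq_integrable[OF b] by (simp add: B_def set_integrable_def)
  have AM_GM: "x * y \<le> (s * x^2 + y^2 / s) / 2" for x y :: real
  proof -
    have "0 \<le> (s * x - y)^2 / s" using s by simp
    then show ?thesis using s by (simp add: power2_eq_square field_simps)
  qed
  have "norm (circ_integral (\<lambda>z. a z * cnj (b z))) \<le> integral\<^sup>L lebesgue (\<lambda>t. (s * A t + B t / s) / 2)"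
    unfolding circ_integral_def set_lebesgue_integral_def
  proof (rule Bochner_Integration.integral_norm_bound_integral)
    show "integrable lebesgue (\<lambda>t. indicat_real {0..2 * pi} t *\<^sub>R (a (cis t) * cnj (b (cis t))))"
      using L2T_product_integrable[OF a b] by (simp add: set_integrable_def)
    show "integrable lebesgue (\<lambda>t. (s * A t + B t / s) / 2)" using iA iB by auto
    show "norm (indicat_real {0..2 * pi} t *\<^sub>R (a (cis t) * cnj (b (cis t)))) \<le> (s * A t + B t / s) / 2" for t
      using AM_GM[of "cmod (a (cis t))" "cmod (b (cis t))"]
      unfolding A_def B_def by (cases "t \<in> {0..2*pi}") (simp_all add: norm_mult)
  qed
  also have "\<dots> = (s * circ_sqnorm a + circ_sqnorm b / s) / 2"
    using iA iB by (simp add: A_def B_def circ_sqnorm_def set_lebesgue_integral_def)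
  finally show ?thesis unfolding ipL2_eq_circ_integral norm_divide using pi_gt_zero by (simp add: field_simps)
qed


section \<open>Fourier coefficients and \<open>H\<^sup>2\<close>\<close>

lemma mult_cnj_eq_1: "cmod z = 1 \<Longrightarrow> z * cnj z = 1"
  using complex_norm_square[of z] by simp

lemma cnj_eq_inverse: "cmod z = 1 \<Longrightarrow> cnj z = inverse z"
  by (metis inverse_unique mult_cnj_eq_1)

lemma cnj_powi: "cmod z = 1 \<Longrightarrow> cnj (z powi n) = z powi (-n)"
  by (simp add: cnj_eq_inverse power_int_inverse power_int_minus)

lemma has_integral_cis_int_mult:
  fixes k :: int assumes "k \<noteq> 0"
  shows "((\<lambda>t. cis (of_int k * t)) has_integral 0) {0..2*pi}"
proof -
  define F where "F = (\<lambda>t::real. exp (\<i> * of_int k * of_real t) / (\<i> * of_int k))"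
  have "(F has_vector_derivative cis (of_int k * t)) (at t within {0..2*pi})" for t
  proof -
    have "((\<lambda>z. exp (\<i> * of_int k * z) / (\<i> * of_int k)) has_field_derivative
           exp (\<i> * of_int k * of_real t)) (at (of_real t))"
      using assms by (auto intro!: derivative_eq_intros)
    from has_vector_derivative_real_field[OF this] show ?thesis
      unfolding F_def
      by (auto intro: has_vector_derivative_at_within simp: cis_conv_exp mult.commute mult.left_commute)
  qed
  then have "((\<lambda>t. cis (of_int k * t)) has_integral (F (2*pi) - F 0)) {0..2*pi}"
    by (intro fundamental_theorem_of_calculus) auto
  moreover have "F (2*pi) = F 0"
    unfolding F_def using cis_multiple_2pi[of "of_int k"]
    by (simp add: cis_conv_exp[symmetric] mult.commute mult.left_commute)
  ultimately show ?thesis by simp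
qed

lemma circ_integral_powi: "circ_integral (\<lambda>z. z powi k) = (if k = 0 then 2*pi else 0)"
proof -
  have "circ_integral (\<lambda>z. z powi k) = integral {0..2*pi} (\<lambda>t. cis (of_int k * t))"
    unfolding circ_integral_def cis_power_int
    by (intro set_lebesgue_integral_eq_integral absolutely_integrable_continuous_real continuous_intros)
  also have "\<dots> = (if k = 0 then 2*pi else 0)"
    using integral_unique[OF has_integral_cis_int_mult, of k] by (simp add: scaleR_conv_of_real)
  finally show ?thesis .
qed

lemma ipL2_powi: "ipL2 (\<lambda>z. z powi m) (\<lambda>z. z powi n) = (if m = n then 1 else 0)"
proof -
  have "ipL2 (\<lambda>z. z powi m) (\<lambda>z. z powi n) = ipL2 (\<lambda>z. z powi (m - n)) (\<lambda>z. 1)"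
  proof (rule ipL2_circ_cong)
    fix z :: complex assume z: "cmod z = 1"
    then have "z \<noteq> 0" by auto
    then show "z powi m * cnj (z powi n) = z powi (m - n) * cnj 1"
      by (simp add: cnj_powi[OF z] power_int_diff power_int_minus divide_inverse
               del: complex_cnj_power_int)
  qed
  then show ?thesis by (simp add: ipL2_eq_circ_integral circ_integral_powi)
qed

lemma fourier_coeff_circ_cong:
  "(\<And>z. cmod z = 1 \<Longrightarrow> f z = f' z) \<Longrightarrow> fourier_coeff f n = fourier_coeff f' n"
  unfolding fourier_coeff_def by (rule ipL2_circ_cong) simp

lemma fourier_coeff_add:
  "L2T f \<Longrightarrow> L2T g \<Longrightarrow> fourier_coeff (\<lambda>z. f z + g z) n = fourier_coeff f n + fourier_coeff g n"
  unfolding fourier_coeff_def by (rule ipL2_add_left) auto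

lemma fourier_coeff_diff:
  "L2T f \<Longrightarrow> L2T g \<Longrightarrow> fourier_coeff (\<lambda>z. f z - g z) n = fourier_coeff f n - fourier_coeff g n"
  unfolding fourier_coeff_def by (rule ipL2_diff_left) auto

lemma fourier_coeff_cmult: "fourier_coeff (\<lambda>z. c * f z) n = c * fourier_coeff f n"
  unfolding fourier_coeff_def by (rule ipL2_cmult_left)

lemma fourier_coeff_powi: "fourier_coeff (\<lambda>z. z powi m) n = (if m = n then 1 else 0)"
  by (simp add: fourier_coeff_def ipL2_powi)

lemma fourier_coeff_const: "fourier_coeff (\<lambda>z. c) n = (if n = 0 then c else 0)"
  using fourier_coeff_cmult[of c "\<lambda>z. 1" n] fourier_coeff_powi[of 0 n] by simp

lemma fourier_coeff_mult_z: "fourier_coeff (\<lambda>z. z * f z) n = fourier_coeff f (n - 1)"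
  unfolding fourier_coeff_def
proof (rule ipL2_circ_cong)
  fix z :: complex assume z: "cmod z = 1"
  then have "z \<noteq> 0" by auto
  then have "z * cnj (z powi n) = cnj (z powi (n - 1))"
    using mult_cnj_eq_1[OF z] by (simp add: cnj_powi[OF z] power_int_diff power_int_minus field_simps del: complex_cnj_power_int)
  then show "z * f z * cnj (z powi n) = f z * cnj (z powi (n - 1))"
    by (simp add: mult.commute mult.left_commute)
qed

lemma fourier_coeff_mult_cnj_z: "fourier_coeff (\<lambda>z. cnj z * f z) n = fourier_coeff f (n + 1)"
  unfolding fourier_coeff_def
proof (rule ipL2_circ_cong)
  fix z :: complex assume z: "cmod z = 1"
  then have "z \<noteq> 0" by auto
  then have "cnj z * cnj (z powi n) = cnj (z powi (n + 1))" by (simp add: power_int_add)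
  then show "cnj z * f z * cnj (z powi n) = f z * cnj (z powi (n + 1))"
    by (simp add: mult.commute mult.left_commute)
qed

lemma fourier_coeff_cnj: "fourier_coeff (\<lambda>z. cnj (G z)) n = cnj (fourier_coeff G (-n))"
proof -
  have "fourier_coeff (\<lambda>z. cnj (G z)) n = ipL2 (\<lambda>z. z powi (-n)) G"
    unfolding fourier_coeff_def
    by (rule ipL2_circ_cong) (simp add: cnj_powi mult.commute del: complex_cnj_power_int)
  then show ?thesis by (simp add: fourier_coeff_def ipL2_cnj[of _ G])
qed

lemma ipL2_powi_left: "ipL2 (\<lambda>z. z powi n) h = cnj (fourier_coeff h n)"
  by (simp add: fourier_coeff_def ipL2_cnj[of _ h])

lemma H2_L2T: "f \<in> H2 \<Longrightarrow> L2T f"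
  by (simp add: H2_def)

lemma H2_fourier_coeff_neg: "f \<in> H2 \<Longrightarrow> n < 0 \<Longrightarrow> fourier_coeff f n = 0"
  by (simp add: H2_def)

lemma H2_circ_cong:
  assumes "f \<in> H2" "\<And>z. cmod z = 1 \<Longrightarrow> f z = f' z" shows "f' \<in> H2"
  using assms L2T_circ_cong[OF _ assms(2)] fourier_coeff_circ_cong[OF assms(2)] by (auto simp: H2_def)

lemma H2_add [intro]: "f \<in> H2 \<Longrightarrow> g \<in> H2 \<Longrightarrow> (\<lambda>z. f z + g z) \<in> H2"
  by (auto simp: H2_def fourier_coeff_add)

lemma H2_diff [intro]: "f \<in> H2 \<Longrightarrow> g \<in> H2 \<Longrightarrow> (\<lambda>z. f z - g z) \<in> H2"
  by (auto simp: H2_def fourier_coeff_diff)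

lemma H2_cmult [intro]: "f \<in> H2 \<Longrightarrow> (\<lambda>z. c * f z) \<in> H2"
  by (auto simp: H2_def fourier_coeff_cmult)

lemma H2_const [intro]: "(\<lambda>z. c) \<in> H2"
  by (auto simp: H2_def fourier_coeff_const)

lemma H2_mult_z [intro]: "f \<in> H2 \<Longrightarrow> (\<lambda>z. z * f z) \<in> H2"
  by (auto simp: H2_def fourier_coeff_mult_z)

lemma H2_mult_cnj_z:
  assumes "f \<in> H2" "val0 f = 0" shows "(\<lambda>z. cnj z * f z) \<in> H2"
proof -
  have "fourier_coeff f (n + 1) = 0" if "n < 0" for n
    using assms that by (cases "n = -1") (auto simp: H2_def val0_def)
  then show ?thesis using assms by (auto simp: H2_def fourier_coeff_mult_cnj_z)
qed

lemma val0_diff_const: "f \<in> H2 \<Longrightarrow> val0 (\<lambda>z. f z - c) = val0 f - c"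
  by (simp add: val0_def fourier_coeff_diff[OF H2_L2T L2T_const] fourier_coeff_const)

lemma H2_backward_shift: "f \<in> H2 \<Longrightarrow> (\<lambda>z. cnj z * (f z - val0 f)) \<in> H2"
  by (rule H2_mult_cnj_z) (auto simp: val0_diff_const)

lemma ipL2_one_left: "L2T h \<Longrightarrow> ipL2 (\<lambda>z. 1) h = cnj (val0 h)"
  using ipL2_powi_left[of 0 h] by (simp add: val0_def)

section \<open>Inner functions and model spaces\<close>

lemma inner_fun_H2: "inner_fun \<theta> \<Longrightarrow> \<theta> \<in> H2"
  by (simp add: inner_fun_def Hinf_def)

lemma inner_fun_circ_measurable: "inner_fun \<theta> \<Longrightarrow> circ_measurable \<theta>"
  by (simp add: inner_fun_H2 H2_L2T L2T_circ_measurable)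

lemma inner_fun_unimodular: "inner_fun \<theta> \<Longrightarrow> circ_ae (\<lambda>z. \<theta> z * cnj (\<theta> z) = 1)"
  unfolding inner_fun_def by (auto elim!: circ_ae_mono intro: mult_cnj_eq_1)

lemma L2T_inner_mult: "inner_fun \<theta> \<Longrightarrow> L2T h \<Longrightarrow> L2T (\<lambda>z. \<theta> z * h z)"
  by (rule L2T_ae_bounded_mult[where M = 1])
    (auto simp: inner_fun_circ_measurable inner_fun_def elim!: circ_ae_mono)

lemma ipL2_inner_mult:
  assumes "inner_fun \<theta>" "L2T f" "L2T h"
  shows "ipL2 (\<lambda>z. \<theta> z * f z) (\<lambda>z. \<theta> z * h z) = ipL2 f h"
proof (rule ipL2_ae_cong)
  show "circ_measurable (\<lambda>z. \<theta> z * f z)" "circ_measurable (\<lambda>z. \<theta> z * h z)"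
    "circ_measurable f" "circ_measurable h"
    using assms by (auto intro!: L2T_circ_measurable L2T_inner_mult)
  show "circ_ae (\<lambda>z. \<theta> z * f z * cnj (\<theta> z * h z) = f z * cnj (h z))"
    using inner_fun_unimodular[OF assms(1)] by (rule circ_ae_mono) (simp add: algebra_simps)
qed

lemma Kmod_H2: "f \<in> Kmod \<theta> \<Longrightarrow> f \<in> H2"
  by (simp add: Kmod_def)

lemma Kmod_L2T: "f \<in> Kmod \<theta> \<Longrightarrow> L2T f"
  by (simp add: Kmod_def H2_def)

lemma Kmod_orth: "f \<in> Kmod \<theta> \<Longrightarrow> h \<in> H2 \<Longrightarrow> ipL2 f (\<lambda>z. \<theta> z * h z) = 0"
  by (simp add: Kmod_def)

lemma Kmod_diff:
  "inner_fun \<theta> \<Longrightarrow> f \<in> Kmod \<theta> \<Longrightarrow> g \<in> Kmod \<theta> \<Longrightarrow> (\<lambda>z. f z - g z) \<in> Kmod \<theta>"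
  unfolding Kmod_def by (auto simp: ipL2_diff_left H2_L2T L2T_inner_mult)

lemma Kmod_orth_self_eq_0:
  assumes "f \<in> Kmod \<theta>" "\<And>k. k \<in> Kmod \<theta> \<Longrightarrow> ipL2 f k = 0"
  shows "circ_ae (\<lambda>z. f z = 0)"
proof -
  have "circ_sqnorm f = 0"
    using assms ipL2_self[of f] circ_sqnorm_nonneg[of f] by simp
  then show ?thesis using circ_sqnorm_eq_0 Kmod_L2T[OF assms(1)] by blast
qed

lemma cnj_z_mult_inner_in_Kmod:
  assumes "inner_fun \<theta>" "val0 \<theta> = 0"
  shows "(\<lambda>z. cnj z * \<theta> z) \<in> Kmod \<theta>"
  unfolding Kmod_def
proof (intro CollectI conjI ballI)
  show "(\<lambda>z. cnj z * \<theta> z) \<in> H2" using assms by (intro H2_mult_cnj_z inner_fun_H2)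
  fix h assume h: "h \<in> H2"
  have "ipL2 (\<lambda>z. cnj z * \<theta> z) (\<lambda>z. \<theta> z * h z) = ipL2 (\<lambda>z. \<theta> z * cnj z) (\<lambda>z. \<theta> z * h z)"
    by (simp add: mult.commute)
  also have "\<dots> = ipL2 (\<lambda>z. cnj z) h"
    using assms h by (intro ipL2_inner_mult H2_L2T L2T_mult_cnj_z[of "\<lambda>z. 1", simplified] L2T_const)
  also have "\<dots> = ipL2 (\<lambda>z. z powi (-1)) h"
    by (rule ipL2_circ_cong) (simp add: cnj_eq_inverse power_int_minus)
  also have "\<dots> = 0"
    using H2_fourier_coeff_neg[OF h, of "-1"] ipL2_powi_left[of "-1" h] by simp
  finally show "ipL2 (\<lambda>z. cnj z * \<theta> z) (\<lambda>z. \<theta> z * h z) = 0" .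
qed

text \<open>\<^const>\<open>PK\<close> makes an arbitrary choice of representative; any function with its defining
  property agrees with that choice almost everywhere.\<close>

lemma PK_ae_unique:
  assumes "inner_fun \<theta>" "L2T f" "p \<in> Kmod \<theta>"
    and orth: "\<And>k. k \<in> Kmod \<theta> \<Longrightarrow> ipL2 (\<lambda>z. f z - p z) k = 0"
  shows "aeq (PK \<theta> f) p"
proof -
  define q where "q = PK \<theta> f"
  have "q \<in> Kmod \<theta> \<and> (\<forall>k\<in>Kmod \<theta>. ipL2 (\<lambda>z. f z - q z) k = 0)"
    unfolding q_def PK_def by (rule someI[of _ p]) (use assms in auto)
  then have q: "q \<in> Kmod \<theta>" "\<And>k. k \<in> Kmod \<theta> \<Longrightarrow> ipL2 (\<lambda>z. f z - q z) k = 0"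
    by auto
  have "ipL2 (\<lambda>z. q z - p z) k = 0" if k: "k \<in> Kmod \<theta>" for k
  proof -
    have "ipL2 (\<lambda>z. (f z - p z) - (f z - q z)) k = ipL2 (\<lambda>z. f z - p z) k - ipL2 (\<lambda>z. f z - q z) k"
      using assms q k by (intro ipL2_diff_left) (auto intro: Kmod_L2T)
    then show ?thesis using orth[OF k] q(2)[OF k] by simp
  qed
  then have "circ_ae (\<lambda>z. q z - p z = 0)"
    using Kmod_orth_self_eq_0 Kmod_diff[OF assms(1) q(1) assms(3)] by blast
  then show ?thesis unfolding aeq_def q_def by (rule circ_ae_mono) simp
qed

lemma shift_minus_in_Kmod:
  assumes \<theta>: "inner_fun \<theta>" and k: "k \<in> Kmod \<theta>"
  shows "(\<lambda>z. z * k z - ipL2 k (\<lambda>w. cnj w * \<theta> w) * \<theta> z) \<in> Kmod \<theta>"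
  unfolding Kmod_def
proof (intro CollectI conjI ballI)
  define b where "b = ipL2 k (\<lambda>w. cnj w * \<theta> w)"
  have kL: "L2T k" and \<theta>L: "L2T \<theta>" using k \<theta> by (auto intro: Kmod_L2T H2_L2T inner_fun_H2)
  show "(\<lambda>z. z * k z - ipL2 k (\<lambda>w. cnj w * \<theta> w) * \<theta> z) \<in> H2"
    using k \<theta> by (intro H2_diff H2_mult_z H2_cmult[of _ b, unfolded b_def] Kmod_H2 inner_fun_H2)
  fix h assume h: "h \<in> H2"
  define h' where "h' = (\<lambda>z. cnj z * (h z - val0 h))"
  have h'H: "h' \<in> H2" unfolding h'_def using h by (rule H2_backward_shift)
  have hL: "L2T h" using h by (rule H2_L2T)
  have "ipL2 (\<lambda>z. z * k z) (\<lambda>z. \<theta> z * h z) = ipL2 k (\<lambda>z. \<theta> z * h' z + val0 h * (cnj z * \<theta> z))"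
    by (rule ipL2_circ_cong) (simp add: h'_def mult_cnj_eq_1 algebra_simps)
  also have "\<dots> = ipL2 k (\<lambda>z. \<theta> z * h' z) + ipL2 k (\<lambda>z. val0 h * (cnj z * \<theta> z))"
    using kL \<theta>L H2_L2T[OF h'H] by (intro ipL2_add_right L2T_inner_mult[OF \<theta>] L2T_cmult L2T_mult_cnj_z)
  also have "\<dots> = cnj (val0 h) * b"
    using Kmod_orth[OF k h'H] by (simp add: ipL2_cmult_right b_def)
  finally have 1: "ipL2 (\<lambda>z. z * k z) (\<lambda>z. \<theta> z * h z) = cnj (val0 h) * b" .
  have 2: "ipL2 (\<lambda>z. b * \<theta> z) (\<lambda>z. \<theta> z * h z) = b * cnj (val0 h)"
    using ipL2_inner_mult[OF \<theta> L2T_const[of 1] hL] ipL2_one_left[OF hL]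
    by (simp add: ipL2_cmult_left)
  show "ipL2 (\<lambda>z. z * k z - ipL2 k (\<lambda>w. cnj w * \<theta> w) * \<theta> z) (\<lambda>z. \<theta> z * h z) = 0"
    using kL \<theta>L hL L2T_inner_mult[OF \<theta> hL]
    by (subst ipL2_diff_left) (auto simp: 1 2 b_def[symmetric])
qed

lemma Sc_ae_eq:
  assumes \<theta>: "inner_fun \<theta>" and k: "k \<in> Kmod \<theta>"
  shows "aeq (Sc \<theta> k) (\<lambda>z. z * k z - ipL2 k (\<lambda>w. cnj w * \<theta> w) * \<theta> z)"
  unfolding Sc_def
proof (rule PK_ae_unique[OF \<theta> _ shift_minus_in_Kmod[OF \<theta> k]])
  show "L2T (\<lambda>z. z * k z)" using k by (intro L2T_mult_z Kmod_L2T)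
  fix k' assume "k' \<in> Kmod \<theta>"
  then have "ipL2 (\<lambda>z. ipL2 k (\<lambda>w. cnj w * \<theta> w) * \<theta> z) k' = 0"
    using Kmod_orth[OF _ H2_const, of k' \<theta> 1] ipL2_cnj[of \<theta> k'] by (simp add: ipL2_cmult_left)
  then show "ipL2 (\<lambda>z. z * k z - (z * k z - ipL2 k (\<lambda>w. cnj w * \<theta> w) * \<theta> z)) k' = 0"
    by simp
qed

section \<open>Trigonometric polynomials\<close>

definition trig_poly :: "(complex \<Rightarrow> complex) \<Rightarrow> bool" where
  "trig_poly p \<longleftrightarrow> (\<exists>P N. \<forall>z. cmod z = 1 \<longrightarrow> p z = poly P z * cnj z ^ N)"

lemma trig_poly_circ_cong: "trig_poly f \<Longrightarrow> (\<And>z. cmod z = 1 \<Longrightarrow> f z = g z) \<Longrightarrow> trig_poly g"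
  unfolding trig_poly_def by metis

lemma trig_poly_const [intro]: "trig_poly (\<lambda>z. c)"
  unfolding trig_poly_def by (rule exI[of _ "[:c:]"], rule exI[of _ 0]) simp

lemma trig_poly_z: "trig_poly (\<lambda>z. z)"
  unfolding trig_poly_def by (rule exI[of _ "[:0, 1:]"], rule exI[of _ 0]) simp

lemma trig_poly_cnj_z: "trig_poly (\<lambda>z. cnj z)"
  unfolding trig_poly_def by (rule exI[of _ "[:1:]"], rule exI[of _ 1]) simp

lemma trig_poly_mult [intro]:
  assumes "trig_poly f" "trig_poly g" shows "trig_poly (\<lambda>z. f z * g z)"
proof -
  obtain P N Q M where "\<And>z. cmod z = 1 \<Longrightarrow> f z = poly P z * cnj z ^ N"
    and "\<And>z. cmod z = 1 \<Longrightarrow> g z = poly Q z * cnj z ^ M"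
    using assms unfolding trig_poly_def by metis
  then show ?thesis unfolding trig_poly_def
    by (intro exI[of _ "P * Q"] exI[of _ "N + M"]) (simp add: power_add algebra_simps)
qed

lemma trig_poly_add [intro]:
  assumes "trig_poly f" "trig_poly g" shows "trig_poly (\<lambda>z. f z + g z)"
proof -
  obtain P N Q M where f: "\<And>z. cmod z = 1 \<Longrightarrow> f z = poly P z * cnj z ^ N"
    and g: "\<And>z. cmod z = 1 \<Longrightarrow> g z = poly Q z * cnj z ^ M"
    using assms unfolding trig_poly_def by metis
  have "f z + g z = poly (P * monom 1 M + Q * monom 1 N) z * cnj z ^ (N + M)" if z: "cmod z = 1" for z
  proof -
    have "(z * cnj z) ^ M = 1" "(z * cnj z) ^ N = 1" using mult_cnj_eq_1[OF z] by auto
    then have "f z + g z = poly P z * cnj z ^ N * (z * cnj z) ^ M + poly Q z * cnj z ^ M * (z * cnj z) ^ N"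
      using f[OF z] g[OF z] by simp
    then show ?thesis by (simp add: poly_monom power_add power_mult_distrib algebra_simps)
  qed
  then show ?thesis unfolding trig_poly_def by blast
qed

lemma trig_poly_Re: "trig_poly (\<lambda>z. complex_of_real (Re z))"
proof -
  have "trig_poly (\<lambda>z. (1/2) * (z + cnj z))"
    by (intro trig_poly_mult trig_poly_add trig_poly_const trig_poly_z trig_poly_cnj_z)
  then show ?thesis by (rule trig_poly_circ_cong) (simp add: complex_add_cnj)
qed

lemma trig_poly_Im: "trig_poly (\<lambda>z. complex_of_real (Im z))"
proof -
  have "trig_poly (\<lambda>z. (1/(2*\<i>)) * (z + (-1) * cnj z))"
    by (intro trig_poly_mult trig_poly_add trig_poly_const trig_poly_z trig_poly_cnj_z)
  then show ?thesis by (rule trig_poly_circ_cong) (simp add: complex_diff_cnj algebra_simps)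
qed

lemma bounded_linear_complex_to_real:
  fixes h :: "complex \<Rightarrow> real"
  assumes "bounded_linear h"
  shows "h z = Re z * h 1 + Im z * h \<i>"
proof -
  interpret linear h using assms by (rule bounded_linear.linear)
  have "z = Re z *\<^sub>R 1 + Im z *\<^sub>R \<i>" by (simp add: complex_eq_iff)
  then have "h z = h (Re z *\<^sub>R 1 + Im z *\<^sub>R \<i>)" by simp
  also have "\<dots> = Re z * h 1 + Im z * h \<i>" by (simp add: add scale)
  finally show ?thesis .
qed

lemma trig_poly_real_polynomial_function:
  "real_polynomial_function h \<Longrightarrow> trig_poly (\<lambda>z. complex_of_real (h z))"
proof (induction rule: real_polynomial_function.induct)
  case (linear h)
  have "trig_poly (\<lambda>z. complex_of_real (Re z) * h 1 + complex_of_real (Im z) * h \<i>)"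
    by (intro trig_poly_add trig_poly_mult trig_poly_const trig_poly_Re trig_poly_Im)
  moreover have "complex_of_real (Re z) * h 1 + complex_of_real (Im z) * h \<i> = complex_of_real (h z)" for z
    using bounded_linear_complex_to_real[OF linear, of z] by (metis of_real_add of_real_mult)
  ultimately show ?case by (rule trig_poly_circ_cong)
next
  case (add f g)
  show ?case using trig_poly_add[OF add.IH] by simp
next
  case (mult f g)
  show ?case using trig_poly_mult[OF mult.IH] by simp
qed auto

lemma trig_poly_polynomial_function:
  assumes "polynomial_function (g :: complex \<Rightarrow> complex)"
  shows "trig_poly g"
proof -
  have "real_polynomial_function (Re \<circ> g)" "real_polynomial_function (Im \<circ> g)"
    using assms unfolding polynomial_function_def by (auto intro: bounded_linear_Re bounded_linear_Im)
  then have "trig_poly (\<lambda>z. complex_of_real (Re (g z)) + \<i> * complex_of_real (Im (g z)))"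
    using trig_poly_real_polynomial_function by (intro trig_poly_add trig_poly_mult) (auto simp: o_def)
  then show ?thesis by (rule trig_poly_circ_cong) (simp add: complex_eq_iff)
qed

lemma trig_poly_sum_powi:
  assumes "trig_poly p"
  obtains N :: "int set" and a where "finite N" "\<And>z. cmod z = 1 \<Longrightarrow> p z = (\<Sum>n\<in>N. a n * z powi n)"
proof -
  obtain P K where p: "\<And>z. cmod z = 1 \<Longrightarrow> p z = poly P z * cnj z ^ K"
    using assms unfolding trig_poly_def by metis
  define e where "e = (\<lambda>i::nat. int i - int K)"
  have inj: "inj_on e {..degree P}" by (simp add: e_def inj_on_def)
  show ?thesis
  proof (rule that[of "e ` {..degree P}" "\<lambda>n. coeff P (nat (n + int K))"])
    fix z :: complex assume z: "cmod z = 1"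
    then have "z \<noteq> 0" by auto
    have "p z = (\<Sum>i\<le>degree P. coeff P i * z ^ i) * z powi (- int K)"
      using p[OF z] cnj_eq_inverse[OF z] by (simp add: poly_altdef power_int_minus power_inverse)
    also have "\<dots> = (\<Sum>i\<le>degree P. coeff P i * z powi e i)"
      using \<open>z \<noteq> 0\<close>
      by (simp add: e_def sum_distrib_right power_int_diff power_int_minus divide_inverse mult.assoc)
    also have "\<dots> = (\<Sum>n\<in>e ` {..degree P}. coeff P (nat (n + int K)) * z powi n)"
      by (subst sum.reindex[OF inj]) (simp add: e_def)
    finally show "p z = (\<Sum>n\<in>e ` {..degree P}. coeff P (nat (n + int K)) * z powi n)" .
  qed simp
qed

lemma L2T_sum_powi: "finite N \<Longrightarrow> L2T (\<lambda>z. \<Sum>n\<in>N. a n * z powi n)"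
  by (induction rule: finite_induct) (simp_all add: L2T_const L2T_add L2T_cmult L2T_powi)

lemma L2T_trig_poly:
  assumes "trig_poly p" shows "L2T p"
proof -
  obtain N a where "finite N" and p: "\<And>z. cmod z = 1 \<Longrightarrow> p z = (\<Sum>n\<in>N. a n * z powi n)"
    using trig_poly_sum_powi[OF assms] by blast
  then show ?thesis using L2T_circ_cong[OF L2T_sum_powi, of N a p] by simp
qed

lemma ipL2_sum_powi_left:
  assumes "finite N" "L2T h"
  shows "ipL2 (\<lambda>z. \<Sum>n\<in>N. a n * z powi n) h = (\<Sum>n\<in>N. a n * cnj (fourier_coeff h n))"
  using assms(1)
proof (induction rule: finite_induct)
  case (insert m N)
  have "ipL2 (\<lambda>z. \<Sum>n\<in>insert m N. a n * z powi n) h =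
      ipL2 (\<lambda>z. a m * z powi m + (\<Sum>n\<in>N. a n * z powi n)) h"
    using insert by simp
  also have "\<dots> = a m * ipL2 (\<lambda>z. z powi m) h + ipL2 (\<lambda>z. \<Sum>n\<in>N. a n * z powi n) h"
    using insert assms(2) by (subst ipL2_add_left) (auto simp: ipL2_cmult_left intro: L2T_sum_powi)
  finally show ?case using insert by (simp add: ipL2_powi_left)
qed (simp add: ipL2_def)

lemma ipL2_sum_powi_left_eq_0:
  "finite N \<Longrightarrow> L2T h \<Longrightarrow> (\<And>n. n \<in> N \<Longrightarrow> fourier_coeff h n = 0) \<Longrightarrow>
    ipL2 (\<lambda>z. \<Sum>n\<in>N. a n * z powi n) h = 0"
  by (simp add: ipL2_sum_powi_left)

lemma fourier_coeff_sum_powi: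
  assumes "finite N"
  shows "fourier_coeff (\<lambda>z. \<Sum>m\<in>N. a m * z powi m) n = (if n \<in> N then a n else 0)"
proof -
  have "fourier_coeff (\<lambda>z. \<Sum>m\<in>N. a m * z powi m) n = ipL2 (\<lambda>z. \<Sum>m\<in>N. a m * z powi m) (\<lambda>z. z powi n)"
    by (simp only: fourier_coeff_def)
  also have "\<dots> = (\<Sum>m\<in>N. if m = n then a m else 0)"
    using assms by (simp add: ipL2_sum_powi_left L2T_powi fourier_coeff_powi if_distrib cong: if_cong)
  also have "\<dots> = (if n \<in> N then a n else 0)"
    using assms by (simp add: sum.delta)
  finally show ?thesis .
qed

section \<open>Density of trigonometric polynomials\<close>

text \<open>An extended nonnegative integral, so that it is meaningful before square integrability is
  known.\<close>

definition period_sqnorm :: "(real \<Rightarrow> complex) \<Rightarrow> ennreal" where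
  "period_sqnorm f = (\<integral>\<^sup>+ t. ennreal (indicator {0..2*pi} t * (cmod (f t))^2) \<partial>lebesgue)"

definition circ_approximable :: "(real \<Rightarrow> complex) \<Rightarrow> bool" where
  "circ_approximable f \<longleftrightarrow> f \<in> borel_measurable lebesgue \<and>
     (\<forall>\<delta>>0. \<exists>\<psi>. continuous_on (sphere 0 1) \<psi> \<and> period_sqnorm (\<lambda>t. f t - \<psi> (cis t)) < ennreal \<delta>)"

lemma period_sqnorm_cong: "(\<And>t. t \<in> {0..2*pi} \<Longrightarrow> f t = g t) \<Longrightarrow> period_sqnorm f = period_sqnorm g"
  unfolding period_sqnorm_def by (intro nn_integral_cong) (auto simp: indicator_def)

lemma period_sqnorm_circ:
  assumes "L2T f" shows "period_sqnorm (\<lambda>t. f (cis t)) = ennreal (circ_sqnorm f)"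
proof -
  have "integrable lebesgue (\<lambda>t. indicator {0..2*pi} t * (cmod (f (cis t)))^2)"
    using L2T_sq_integrable[OF assms] by (simp add: set_integrable_def)
  from nn_integral_eq_integral[OF this] show ?thesis
    unfolding period_sqnorm_def circ_sqnorm_def set_lebesgue_integral_def by (simp add: indicator_def)
qed

lemma period_sqnorm_integrand_measurable:
  assumes "f \<in> borel_measurable lebesgue"
  shows "(\<lambda>t. ennreal (indicator {0..2*pi} t * (cmod (f t))^2)) \<in> borel_measurable lebesgue"
proof -
  have "(\<lambda>t. (cmod (f t))^2) \<in> borel_measurable lebesgue"
    by (rule measurable_compose[OF assms borel_measurable_continuous_onI]) (intro continuous_intros)
  moreover have "indicator {0..2*pi::real} \<in> borel_measurable lebesgue"
    by (rule borel_measurable_indicator) simp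
  ultimately show ?thesis
    by (intro measurable_compose[OF _ measurable_ennreal] borel_measurable_times) auto
qed

lemma ennreal_two_sum: "0 \<le> a \<Longrightarrow> 0 \<le> b \<Longrightarrow> ennreal (2 * a + 2 * b) = 2 * ennreal a + 2 * ennreal b"
  by (metis ennreal_mult'' ennreal_numeral ennreal_plus mult_nonneg_nonneg zero_le_numeral)

lemma period_sqnorm_add_le:
  assumes "f \<in> borel_measurable lebesgue" "g \<in> borel_measurable lebesgue"
  shows "period_sqnorm (\<lambda>t. f t + g t) \<le> 2 * period_sqnorm f + 2 * period_sqnorm g"
proof -
  have "(cmod (a + b))^2 \<le> 2 * (cmod a)^2 + 2 * (cmod b)^2" for a b :: complex
  proof -
    have "(cmod (a + b))^2 \<le> (cmod a + cmod b)^2" by (intro power_mono norm_triangle_ineq) auto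
    also have "\<dots> \<le> 2 * (cmod a)^2 + 2 * (cmod b)^2"
      using sum_squares_bound[of "cmod a" "cmod b"] by (simp add: power2_sum)
    finally show ?thesis .
  qed
  then have "indicator {0..2*pi} t * (cmod (f t + g t))^2 \<le>
      2 * (indicator {0..2*pi} t * (cmod (f t))^2) + 2 * (indicator {0..2*pi} t * (cmod (g t))^2)" for t
    by (cases "t \<in> {0..2*pi}") auto
  then have "ennreal (indicator {0..2*pi} t * (cmod (f t + g t))^2) \<le>
      2 * ennreal (indicator {0..2*pi} t * (cmod (f t))^2) + 2 * ennreal (indicator {0..2*pi} t * (cmod (g t))^2)"
    for t
    using ennreal_leI ennreal_two_sum by (metis indicator_pos_le mult_nonneg_nonneg zero_le_power2)
  then have "period_sqnorm (\<lambda>t. f t + g t) \<le> (\<integral>\<^sup>+ t. 2 * ennreal (indicator {0..2*pi} t * (cmod (f t))^2)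
      + 2 * ennreal (indicator {0..2*pi} t * (cmod (g t))^2) \<partial>lebesgue)"
    unfolding period_sqnorm_def by (intro nn_integral_mono)
  also have "\<dots> = 2 * period_sqnorm f + 2 * period_sqnorm g"
    using period_sqnorm_integrand_measurable[OF assms(1)] period_sqnorm_integrand_measurable[OF assms(2)]
    unfolding period_sqnorm_def by (simp add: nn_integral_add nn_integral_cmult)
  finally show ?thesis .
qed

lemma period_sqnorm_triangle_less:
  assumes "f \<in> borel_measurable lebesgue" "g \<in> borel_measurable lebesgue" "h \<in> borel_measurable lebesgue"
    and "period_sqnorm (\<lambda>t. f t - g t) < ennreal (\<delta>/4)" "period_sqnorm (\<lambda>t. g t - h t) < ennreal (\<delta>/4)"
  shows "period_sqnorm (\<lambda>t. f t - h t) < ennreal \<delta>"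
proof -
  have "period_sqnorm (\<lambda>t. f t - h t) \<le> 2 * period_sqnorm (\<lambda>t. f t - g t) + 2 * period_sqnorm (\<lambda>t. g t - h t)"
    using period_sqnorm_add_le[of "\<lambda>t. f t - g t" "\<lambda>t. g t - h t"] assms(1-3) by simp
  also have "\<dots> < 2 * ennreal (\<delta>/4) + 2 * ennreal (\<delta>/4)"
    using assms(4,5) by (intro add_strict_mono ennreal_mult_strict_left_mono) auto
  also have "\<dots> = ennreal \<delta>"
  proof -
    have "0 < ennreal (\<delta>/4)" using assms(4) by (rule order.strict_trans1[rotated]) simp
    then have "0 \<le> \<delta>/4" by simp
    then show ?thesis using ennreal_two_sum[of "\<delta>/4" "\<delta>/4"] by simp
  qed
  finally show ?thesis .
qed

lemma period_sqnorm_cmult: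
  "f \<in> borel_measurable lebesgue \<Longrightarrow> period_sqnorm (\<lambda>t. c * f t) = ennreal ((cmod c)^2) * period_sqnorm f"
  unfolding period_sqnorm_def
  by (subst nn_integral_cmult[symmetric, OF period_sqnorm_integrand_measurable])
     (auto intro!: nn_integral_cong simp: ennreal_mult[symmetric] norm_mult power_mult_distrib mult_ac)

lemma period_sqnorm_le_uniform:
  assumes "\<And>t. t \<in> {0..2*pi} \<Longrightarrow> cmod (f t) \<le> c"
  shows "period_sqnorm f \<le> ennreal (2 * pi * c^2)"
proof -
  have "period_sqnorm f \<le> (\<integral>\<^sup>+ t. ennreal (c^2) * indicator {0..2*pi} t \<partial>lebesgue)"
    unfolding period_sqnorm_def
    using assms by (intro nn_integral_mono) (auto simp: indicator_def intro!: ennreal_leI power_mono)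
  also have "\<dots> = ennreal (2 * pi * c^2)"
    by (simp add: nn_integral_cmult_indicator ennreal_mult[symmetric] mult.commute)
  finally show ?thesis .
qed

lemma continuous_on_sphere_cis_measurable:
  "continuous_on (sphere 0 1) \<psi> \<Longrightarrow> (\<lambda>t. \<psi> (cis t)) \<in> borel_measurable lebesgue"
  by (intro continuous_imp_lebesgue_measurable continuous_on_compose2[of "sphere 0 1" \<psi> UNIV cis])
     (auto intro: continuous_intros)

lemma circ_approximable_continuous:
  "continuous_on (sphere 0 1) \<psi> \<Longrightarrow> circ_approximable (\<lambda>t. \<psi> (cis t))"
  unfolding circ_approximable_def period_sqnorm_def
  by (auto intro: continuous_on_sphere_cis_measurable)

lemma circ_approximable_measurable: "circ_approximable f \<Longrightarrow> f \<in> borel_measurable lebesgue"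
  by (simp add: circ_approximable_def)

lemma circ_approximableD:
  "circ_approximable f \<Longrightarrow> \<delta> > 0 \<Longrightarrow>
    \<exists>\<psi>. continuous_on (sphere 0 1) \<psi> \<and> period_sqnorm (\<lambda>t. f t - \<psi> (cis t)) < ennreal \<delta>"
  by (simp add: circ_approximable_def)

lemma circ_approximable_limit:
  assumes "f \<in> borel_measurable lebesgue"
    and "\<And>\<delta>. \<delta> > 0 \<Longrightarrow> \<exists>g. circ_approximable g \<and> period_sqnorm (\<lambda>t. f t - g t) < ennreal \<delta>"
  shows "circ_approximable f"
  unfolding circ_approximable_def
proof (intro conjI allI impI assms(1))
  fix \<delta> :: real assume "\<delta> > 0"
  then obtain g where g: "circ_approximable g" "period_sqnorm (\<lambda>t. f t - g t) < ennreal (\<delta>/4)"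
    using assms(2)[of "\<delta>/4"] by auto
  then obtain \<psi> where \<psi>: "continuous_on (sphere 0 1) \<psi>" "period_sqnorm (\<lambda>t. g t - \<psi> (cis t)) < ennreal (\<delta>/4)"
    using circ_approximableD[of g "\<delta>/4"] \<open>\<delta> > 0\<close> by auto
  have "period_sqnorm (\<lambda>t. f t - \<psi> (cis t)) < ennreal \<delta>"
    using assms(1) circ_approximable_measurable[OF g(1)] continuous_on_sphere_cis_measurable[OF \<psi>(1)] g(2) \<psi>(2)
    by (rule period_sqnorm_triangle_less)
  then show "\<exists>\<psi>. continuous_on (sphere 0 1) \<psi> \<and> period_sqnorm (\<lambda>t. f t - \<psi> (cis t)) < ennreal \<delta>"
    using \<psi>(1) by blast
qed

lemma circ_approximable_add:
  assumes f: "circ_approximable f" and g: "circ_approximable g"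
  shows "circ_approximable (\<lambda>t. f t + g t)"
proof (rule circ_approximable_limit)
  have mf: "f \<in> borel_measurable lebesgue" and mg: "g \<in> borel_measurable lebesgue"
    using f g by (auto dest: circ_approximable_measurable)
  then show "(\<lambda>t. f t + g t) \<in> borel_measurable lebesgue" by measurable
  fix \<delta> :: real assume "\<delta> > 0"
  then obtain \<psi> where \<psi>: "continuous_on (sphere 0 1) \<psi>" "period_sqnorm (\<lambda>t. f t - \<psi> (cis t)) < ennreal \<delta>"
    using circ_approximableD[OF f] by blast
  have "circ_approximable (\<lambda>t. \<psi> (cis t) + g t)"
  proof (rule circ_approximable_limit)
    show "(\<lambda>t. \<psi> (cis t) + g t) \<in> borel_measurable lebesgue"
      using continuous_on_sphere_cis_measurable[OF \<psi>(1)] mg by measurable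
  next
    fix \<epsilon> :: real assume "\<epsilon> > 0"
    then obtain \<phi> where \<phi>: "continuous_on (sphere 0 1) \<phi>" "period_sqnorm (\<lambda>t. g t - \<phi> (cis t)) < ennreal \<epsilon>"
      using circ_approximableD[OF g] by blast
    have "circ_approximable (\<lambda>t. \<psi> (cis t) + \<phi> (cis t))"
      using \<psi>(1) \<phi>(1) by (intro circ_approximable_continuous[of "\<lambda>z. \<psi> z + \<phi> z", simplified] continuous_intros)
    moreover have "period_sqnorm (\<lambda>t. (\<psi> (cis t) + g t) - (\<psi> (cis t) + \<phi> (cis t))) < ennreal \<epsilon>"
      using \<phi>(2) by simp
    ultimately show "\<exists>h. circ_approximable h \<and> period_sqnorm (\<lambda>t. (\<psi> (cis t) + g t) - h t) < ennreal \<epsilon>"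
      by blast
  qed
  moreover have "period_sqnorm (\<lambda>t. (f t + g t) - (\<psi> (cis t) + g t)) < ennreal \<delta>"
    using \<psi>(2) by simp
  ultimately show "\<exists>h. circ_approximable h \<and> period_sqnorm (\<lambda>t. (f t + g t) - h t) < ennreal \<delta>"
    by blast
qed

lemma circ_approximable_cmult:
  assumes f: "circ_approximable f" shows "circ_approximable (\<lambda>t. c * f t)"
proof (rule circ_approximable_limit)
  have mf: "f \<in> borel_measurable lebesgue" using f by (rule circ_approximable_measurable)
  then show "(\<lambda>t. c * f t) \<in> borel_measurable lebesgue" by measurable
  fix \<delta> :: real assume \<delta>: "\<delta> > 0"
  define K where "K = (cmod c)^2"
  have "\<delta> / (K + 1) > 0" using \<delta> by (intro divide_pos_pos) (auto simp: K_def add_nonneg_pos)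
  then obtain \<psi> where \<psi>: "continuous_on (sphere 0 1) \<psi>"
      "period_sqnorm (\<lambda>t. f t - \<psi> (cis t)) < ennreal (\<delta> / (K + 1))"
    using circ_approximableD[OF f] by blast
  have "period_sqnorm (\<lambda>t. c * f t - c * \<psi> (cis t)) = ennreal K * period_sqnorm (\<lambda>t. f t - \<psi> (cis t))"
    using period_sqnorm_cmult[of "\<lambda>t. f t - \<psi> (cis t)" c] mf continuous_on_sphere_cis_measurable[OF \<psi>(1)]
    by (simp add: K_def right_diff_distrib)
  also have "\<dots> \<le> ennreal K * ennreal (\<delta> / (K + 1))"
    using \<psi>(2) by (intro mult_left_mono) auto
  also have "\<dots> < ennreal \<delta>"
  proof -
    have "K \<ge> 0" by (simp add: K_def)
    then have "K * (\<delta> / (K + 1)) < \<delta>" using \<delta> by (simp add: field_simps)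
    then show ?thesis using \<open>K \<ge> 0\<close> \<delta> by (simp add: ennreal_mult[symmetric] ennreal_lessI)
  qed
  finally have "period_sqnorm (\<lambda>t. c * f t - c * \<psi> (cis t)) < ennreal \<delta>" .
  moreover have "circ_approximable (\<lambda>t. c * \<psi> (cis t))"
    using \<psi>(1) by (intro circ_approximable_continuous[of "\<lambda>z. c * \<psi> z", simplified] continuous_intros)
  ultimately show "\<exists>g. circ_approximable g \<and> period_sqnorm (\<lambda>t. c * f t - g t) < ennreal \<delta>"
    by blast
qed

lemma circ_approximable_sum:
  "finite A \<Longrightarrow> (\<And>y. y \<in> A \<Longrightarrow> circ_approximable (f y)) \<Longrightarrow> circ_approximable (\<lambda>t. \<Sum>y\<in>A. f y t)"
proof (induction rule: finite_induct)
  case empty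
  show ?case using circ_approximable_continuous[of "\<lambda>z. 0"] by simp
next
  case (insert y A)
  then show ?case by (simp add: circ_approximable_add)
qed

lemma Arg2pi_cis_eq: "0 \<le> t \<Longrightarrow> t < 2*pi \<Longrightarrow> Arg2pi (cis t) = t"
  by (rule Arg2pi_unique[of 1]) (auto simp: cis_conv_exp)

lemma cis_Arg2pi: "cmod z = 1 \<Longrightarrow> cis (Arg2pi z) = z"
  using Arg2pi[of z] by (simp add: is_Arg_def cis_conv_exp)

lemma periodic_Arg2pi_cis: "t \<in> {0..2*pi} \<Longrightarrow> f 0 = f (2*pi) \<Longrightarrow> f (Arg2pi (cis t)) = f t"
  using Arg2pi_of_real[of 1] by (cases "t = 2*pi") (auto simp: Arg2pi_cis_eq)

text \<open>\<^const>\<open>cis\<close> is a quotient map from the compact interval \<open>[0, 2\<pi>]\<close> onto the circle.\<close>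

lemma continuous_on_sphere_Arg2pi:
  fixes f :: "real \<Rightarrow> real"
  assumes cf: "continuous_on {0..2*pi} f" and f0: "f 0 = f (2*pi)"
  shows "continuous_on (sphere 0 1) (\<lambda>z. f (Arg2pi z))"
proof -
  let ?X = "top_of_set {0..2*pi::real}" and ?Y = "top_of_set (sphere (0::complex) 1)"
  have cm: "continuous_map ?X ?Y cis"
    by (auto simp: continuous_map_in_subtopology intro: continuous_intros)
  have "cis ` topspace ?X = topspace ?Y"
  proof
    show "topspace ?Y \<subseteq> cis ` topspace ?X"
    proof
      fix z assume "z \<in> topspace ?Y"
      then have "cmod z = 1" by simp
      moreover have "Arg2pi z \<in> {0..2*pi}" using Arg2pi[of z] by auto
      ultimately show "z \<in> cis ` topspace ?X" using cis_Arg2pi by force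
    qed
  qed auto
  then have q: "quotient_map ?X ?Y cis"
    by (intro continuous_imp_quotient_map[OF cm])
       (auto simp: compact_space_subtopology compactin_subtopology Hausdorff_space_subtopology)
  have "continuous_map ?X euclideanreal ((\<lambda>z. f (Arg2pi z)) \<circ> cis)"
  proof (rule continuous_map_eq)
    show "continuous_map ?X euclideanreal f" using cf by simp
  qed (simp add: periodic_Arg2pi_cis[OF _ f0])
  then have "continuous_map ?Y euclideanreal (\<lambda>z. f (Arg2pi z))"
    by (rule continuous_compose_quotient_map[OF q])
  then show ?thesis by simp
qed

lemma circ_bump_exists:
  fixes C U :: "real set"
  assumes "closed C" "open U" "C \<subseteq> U" "U \<subseteq> {0<..<2*pi}"
  obtains f :: "real \<Rightarrow> real"
  where "continuous_on (sphere 0 1) (\<lambda>z. complex_of_real (f (Arg2pi z)))"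
    and "\<And>t. 0 \<le> f t \<and> f t \<le> 1" "\<And>t. t \<in> C \<Longrightarrow> f t = 1" "\<And>t. t \<notin> U \<Longrightarrow> f t = 0"
proof -
  obtain f :: "real \<Rightarrow> real" where cf: "continuous_on UNIV f"
    and fr: "\<And>x. f x \<in> closed_segment 1 0"
    and f1: "\<And>x. x \<in> C \<Longrightarrow> f x = 1" and f0: "\<And>x. x \<in> - U \<Longrightarrow> f x = 0"
    using Urysohn[of C "- U" 1 0] assms(1-3) by (auto simp: closed_Compl)
  have "0 \<notin> U" "2*pi \<notin> U" using assms(4) by auto
  then have "f 0 = f (2*pi)" using f0 by simp
  then have "continuous_on (sphere 0 1) (\<lambda>z. complex_of_real (f (Arg2pi z)))"
    using cf by (intro continuous_intros continuous_on_sphere_Arg2pi continuous_on_subset[OF cf]) auto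
  then show ?thesis
    using that fr f1 f0 by (auto simp: closed_segment_eq_real_ivl)
qed

lemma indicator_minus_bump_sq_le:
  fixes f :: "'a \<Rightarrow> real"
  assumes "C \<subseteq> B \<inter> S" "B \<inter> S \<subseteq> U" "0 \<le> f t" "f t \<le> 1"
    and "t \<in> C \<Longrightarrow> f t = 1" "t \<notin> U \<Longrightarrow> f t = 0"
  shows "(indicator B t - f t)^2 \<le> indicator (- S) t + indicator (U - C) t"
proof -
  consider "t \<in> C" | "t \<in> U - C" | "t \<notin> U" by blast
  then show ?thesis
  proof cases
    case 1 then show ?thesis using assms by (auto simp: indicator_def)
  next
    case 2
    have "(indicator B t - f t)^2 \<le> (1::real)"
      using assms(3,4) by (auto simp: indicator_def power2_eq_square mult_le_one)
    then show ?thesis using 2 by (auto simp: indicator_def)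
  next
    case 3 then show ?thesis using assms by (auto simp: indicator_def)
  qed
qed

lemma period_sqnorm_indicator_minus_bump_le:
  fixes f :: "real \<Rightarrow> real"
  assumes "C \<subseteq> B \<inter> S" "B \<inter> S \<subseteq> U" "U - C \<in> sets lebesgue" "{0..2*pi} - S \<in> sets lebesgue"
    and "\<And>t. 0 \<le> f t \<and> f t \<le> 1" "\<And>t. t \<in> C \<Longrightarrow> f t = 1" "\<And>t. t \<notin> U \<Longrightarrow> f t = 0"
  shows "period_sqnorm (\<lambda>t. complex_of_real (indicator B t - f t)) \<le>
    emeasure lebesgue ({0..2*pi} - S) + emeasure lebesgue (U - C)"
proof -
  have "period_sqnorm (\<lambda>t. complex_of_real (indicator B t - f t)) \<le>
      (\<integral>\<^sup>+ t. indicator ({0..2*pi} - S) t + indicator (U - C) t \<partial>lebesgue)"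
    unfolding period_sqnorm_def
  proof (intro nn_integral_mono)
    fix t
    have "(indicator B t - f t)^2 \<le> indicator (- S) t + indicator (U - C) t"
      using assms(1,2,5-7) by (intro indicator_minus_bump_sq_le) auto
    then have "indicator {0..2*pi} t * (indicator B t - f t)^2 \<le>
        indicator ({0..2*pi} - S) t + indicator (U - C) t"
      by (auto simp: indicator_def)
    then have "ennreal (indicator {0..2*pi} t * (cmod (complex_of_real (indicator B t - f t)))^2) \<le>
        ennreal (indicator ({0..2*pi} - S) t + indicator (U - C) t)"
      by (intro ennreal_leI) (simp del: of_real_diff)
    then show "ennreal (indicator {0..2*pi} t * (cmod (complex_of_real (indicator B t - f t)))^2) \<le>
        indicator ({0..2*pi} - S) t + indicator (U - C) t"
      by (simp add: ennreal_indicator)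
  qed
  also have "\<dots> = emeasure lebesgue ({0..2*pi} - S) + emeasure lebesgue (U - C)"
    using assms(3,4) by (simp add: nn_integral_add)
  finally show ?thesis .
qed

lemma lebesgue_closed_open_approx:
  assumes "A \<in> sets lebesgue" "\<epsilon> > 0"
  obtains C U where "closed C" "open U" "C \<subseteq> A" "A \<subseteq> U" "emeasure lebesgue (U - C) < ennreal \<epsilon>"
proof -
  obtain C where C: "closed C" "C \<subseteq> A" "emeasure lebesgue (A - C) < ennreal (\<epsilon>/2)"
    using sets_lebesgue_inner_closed[OF assms(1)] assms(2) by (metis half_gt_zero)
  obtain U where U: "open U" "A \<subseteq> U" "emeasure lebesgue (U - A) < ennreal (\<epsilon>/2)"
    using sets_lebesgue_outer_open[OF assms(1)] assms(2) by (metis half_gt_zero)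
  have "U \<in> sets lebesgue" "C \<in> sets lebesgue" using U(1) C(1) by (simp_all add: borel_open borel_closed)
  then have "emeasure lebesgue (U - C) \<le> emeasure lebesgue (U - A) + emeasure lebesgue (A - C)"
    using assms(1) by (intro order_trans[OF emeasure_mono emeasure_subadditive]) auto
  also have "\<dots> < ennreal (\<epsilon>/2) + ennreal (\<epsilon>/2)"
    using U(3) C(3) by (rule add_strict_mono)
  also have "\<dots> = ennreal \<epsilon>" using assms(2) by (simp flip: ennreal_plus)
  finally show ?thesis using that C U by blast
qed

lemma circ_approximable_indicator:
  assumes B: "B \<in> sets lebesgue"
  shows "circ_approximable (\<lambda>t. complex_of_real (indicator B t))"
  unfolding circ_approximable_def
proof (intro conjI allI impI)
  show "(\<lambda>t. complex_of_real (indicator B t)) \<in> borel_measurable lebesgue"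
    using B by measurable
  fix \<delta> :: real assume "\<delta> > 0"
  define d where "d = min 1 (\<delta>/8)"
  have d: "0 < d" "d \<le> \<delta>/8" "d < pi" using \<open>\<delta> > 0\<close> pi_gt3 by (auto simp: d_def)
  define S where "S = {d..2*pi-d}"
  have "B \<inter> S \<in> sets lebesgue" "\<delta>/4 > 0" using B \<open>\<delta> > 0\<close> by (auto simp: S_def)
  then obtain C U where C: "closed C" "C \<subseteq> B \<inter> S" and U: "open U" "B \<inter> S \<subseteq> U"
    and UC: "emeasure lebesgue (U - C) < ennreal (\<delta>/4)"
    by (rule lebesgue_closed_open_approx)
  have mU: "U \<in> sets lebesgue" and mC: "C \<in> sets lebesgue"
    using U(1) C(1) by (simp_all add: borel_open borel_closed)
  define U' where "U' = U \<inter> {d/2<..<2*pi-d/2}"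
  have "open U'" "C \<subseteq> U'" "U' \<subseteq> {0<..<2*pi}" using U(1) C(2) U(2) d by (auto simp: U'_def S_def)
  then obtain f where f: "continuous_on (sphere 0 1) (\<lambda>z. complex_of_real (f (Arg2pi z)))"
    "\<And>t. 0 \<le> f t \<and> f t \<le> 1" "\<And>t. t \<in> C \<Longrightarrow> f t = 1" "\<And>t. t \<notin> U' \<Longrightarrow> f t = 0"
    using circ_bump_exists[OF C(1)] by metis
  have "f 0 = f (2*pi)"
    using f(4)[of 0] f(4)[of "2*pi"] \<open>U' \<subseteq> {0<..<2*pi}\<close> by (metis greaterThanLessThan_iff less_irrefl subsetD)
  then have "period_sqnorm (\<lambda>t. complex_of_real (indicator B t) - complex_of_real (f (Arg2pi (cis t)))) =
      period_sqnorm (\<lambda>t. complex_of_real (indicator B t - f t))"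
    by (intro period_sqnorm_cong) (simp add: periodic_Arg2pi_cis)
  also have "\<dots> \<le> emeasure lebesgue ({0..2*pi} - S) + emeasure lebesgue (U - C)"
    using C U f(2-4) mU mC by (intro period_sqnorm_indicator_minus_bump_le) (auto simp: U'_def S_def)
  also have "\<dots> \<le> ennreal (2 * d) + ennreal (\<delta>/4)"
  proof (intro add_mono)
    have "emeasure lebesgue ({0..2*pi} - S) \<le> emeasure lebesgue {0..d} + emeasure lebesgue {2*pi-d..2*pi}"
      by (rule order_trans[OF emeasure_mono emeasure_subadditive]) (auto simp: S_def)
    then show "emeasure lebesgue ({0..2*pi} - S) \<le> ennreal (2 * d)"
      using d by (simp flip: ennreal_plus)
  qed (use UC in simp)
  also have "\<dots> < ennreal \<delta>"
    using d \<open>\<delta> > 0\<close> by (simp flip: ennreal_plus add: ennreal_lessI)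
  finally show "\<exists>\<psi>. continuous_on (sphere 0 1) \<psi> \<and>
      period_sqnorm (\<lambda>t. complex_of_real (indicator B t) - \<psi> (cis t)) < ennreal \<delta>"
    using f(1) by blast
qed

lemma circ_approximable_simple_function:
  assumes "simple_function lebesgue \<sigma>"
  shows "circ_approximable \<sigma>"
proof -
  let ?A = "\<lambda>y. \<sigma> -` {y} \<inter> space lebesgue"
  have "\<sigma> = (\<lambda>t. \<Sum>y\<in>\<sigma> ` space lebesgue. y * complex_of_real (indicator (?A y) t))"
  proof
    fix t
    have "\<sigma> t = (\<Sum>y\<in>\<sigma> ` space lebesgue. indicator (?A y) t *\<^sub>R y)"
      by (rule simple_function_indicator_representation_banach[OF assms]) simp
    also have "\<dots> = (\<Sum>y\<in>\<sigma> ` space lebesgue. y * complex_of_real (indicator (?A y) t))"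
      by (intro sum.cong refl) (simp add: scaleR_conv_of_real mult.commute)
    finally show "\<sigma> t = (\<Sum>y\<in>\<sigma> ` space lebesgue. y * complex_of_real (indicator (?A y) t))" .
  qed
  moreover have "circ_approximable (\<lambda>t. \<Sum>y\<in>\<sigma> ` space lebesgue. y * complex_of_real (indicator (?A y) t))"
  proof (rule circ_approximable_sum)
    show "finite (\<sigma> ` space lebesgue)" using simple_functionD(1)[OF assms] .
    show "circ_approximable (\<lambda>t. y * complex_of_real (indicator (?A y) t))" for y
      using simple_functionD(2)[OF assms] by (intro circ_approximable_cmult circ_approximable_indicator) simp
  qed
  ultimately show ?thesis by simp
qed

lemma integrable_simple_function_approx:
  assumes "integrable lebesgue f" "\<eta> > 0"
  obtains \<sigma> where "simple_function lebesgue \<sigma>" "(\<integral>\<^sup>+ t. ennreal (norm (f t - \<sigma> t)) \<partial>lebesgue) < ennreal \<eta>"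
proof -
  obtain x where "has_bochner_integral lebesgue f x"
    using assms(1) by (auto simp: integrable.simps)
  then obtain s where s: "\<And>i. Bochner_Integration.simple_bochner_integrable lebesgue (s i)"
    and "(\<lambda>i. \<integral>\<^sup>+ t. ennreal (norm (f t - s i t)) \<partial>lebesgue) \<longlonglongrightarrow> 0"
    by (auto simp: has_bochner_integral.simps)
  then have "eventually (\<lambda>i. (\<integral>\<^sup>+ t. ennreal (norm (f t - s i t)) \<partial>lebesgue) < ennreal \<eta>) sequentially"
    using assms(2) by (intro order_tendstoD(2)) auto
  then obtain i where "(\<integral>\<^sup>+ t. ennreal (norm (f t - s i t)) \<partial>lebesgue) < ennreal \<eta>"
    by (auto simp: eventually_sequentially)
  then show ?thesis using s[of i] that by (auto simp: Bochner_Integration.simple_bochner_integrable.simps)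
qed

text \<open>Truncating an approximant at twice the bound \<open>M\<close> of the target turns an \<open>L\<^sup>1\<close> estimate
  into an \<open>L\<^sup>2\<close> estimate.\<close>

lemma norm_diff_truncation_sq_le:
  fixes a b :: "'a::real_normed_vector"
  assumes "norm a \<le> M"
  shows "(norm (a - (if norm b \<le> 2*M then b else 0)))^2 \<le> 3 * M * norm (a - b)"
proof -
  have M: "0 \<le> M" using assms norm_ge_zero order_trans by blast
  have "norm (a - (if norm b \<le> 2*M then b else 0)) \<le> 3 * M \<and>
        norm (a - (if norm b \<le> 2*M then b else 0)) \<le> norm (a - b)"
  proof (cases "norm b \<le> 2*M")
    case True
    then show ?thesis using assms norm_triangle_ineq4[of a b] by simp
  next
    case False
    then show ?thesis using assms M norm_triangle_ineq2[of b a] by (simp add: norm_minus_commute)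
  qed
  then show ?thesis unfolding power2_eq_square using M by (intro mult_mono) auto
qed

lemma period_sqnorm_minus_truncation_le:
  fixes \<phi> \<sigma> :: "real \<Rightarrow> complex"
  assumes "\<phi> \<in> borel_measurable lebesgue" "\<sigma> \<in> borel_measurable lebesgue" and bd: "\<And>t. cmod (\<phi> t) \<le> M"
  shows "period_sqnorm (\<lambda>t. \<phi> t - (if cmod (\<sigma> t) \<le> 2*M then \<sigma> t else 0)) \<le>
    ennreal (3 * M) * (\<integral>\<^sup>+ t. ennreal (norm (indicator {0..2*pi} t *\<^sub>R \<phi> t - \<sigma> t)) \<partial>lebesgue)"
proof -
  have M: "M \<ge> 0" using bd[of 0] norm_ge_zero[of "\<phi> 0"] by linarith
  have "period_sqnorm (\<lambda>t. \<phi> t - (if cmod (\<sigma> t) \<le> 2*M then \<sigma> t else 0)) \<le>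
      (\<integral>\<^sup>+ t. ennreal (3 * M) * ennreal (norm (indicator {0..2*pi} t *\<^sub>R \<phi> t - \<sigma> t)) \<partial>lebesgue)"
    unfolding period_sqnorm_def
  proof (intro nn_integral_mono)
    fix t
    have "indicator {0..2*pi} t * (cmod (\<phi> t - (if cmod (\<sigma> t) \<le> 2*M then \<sigma> t else 0)))^2 \<le>
        3 * M * norm (indicator {0..2*pi} t *\<^sub>R \<phi> t - \<sigma> t)"
      using norm_diff_truncation_sq_le[OF bd, of t "\<sigma> t"] M by (cases "t \<in> {0..2*pi}") auto
    then show "ennreal (indicator {0..2*pi} t * (cmod (\<phi> t - (if cmod (\<sigma> t) \<le> 2*M then \<sigma> t else 0)))^2) \<le>
        ennreal (3 * M) * ennreal (norm (indicator {0..2*pi} t *\<^sub>R \<phi> t - \<sigma> t))"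
      using M by (simp add: ennreal_leI flip: ennreal_mult)
  qed
  also have "\<dots> = ennreal (3 * M) * (\<integral>\<^sup>+ t. ennreal (norm (indicator {0..2*pi} t *\<^sub>R \<phi> t - \<sigma> t)) \<partial>lebesgue)"
  proof (rule nn_integral_cmult)
    show "(\<lambda>t. ennreal (norm (indicator {0..2*pi} t *\<^sub>R \<phi> t - \<sigma> t))) \<in> borel_measurable lebesgue"
      using assms(1,2) continuous_imp_lebesgue_measurable[OF continuous_on_id] by measurable
  qed
  finally show ?thesis .
qed

lemma circ_approximable_bounded:
  assumes m\<phi>: "\<phi> \<in> borel_measurable lebesgue" and bd: "\<And>t. cmod (\<phi> t) \<le> M"
  shows "circ_approximable \<phi>"
proof (rule circ_approximable_limit[OF m\<phi>])
  fix \<delta> :: real assume "\<delta> > 0"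
  have M: "M \<ge> 0" using bd[of 0] norm_ge_zero[of "\<phi> 0"] by linarith
  have "integrable lebesgue (\<lambda>t. indicator {0..2*pi} t *\<^sub>R \<phi> t)"
  proof (rule Bochner_Integration.integrable_bound)
    show "integrable lebesgue (\<lambda>t. indicator {0..2*pi} t *\<^sub>R M)"
      using absolutely_integrable_continuous_real[of 0 "2*pi" "\<lambda>t. M"] by (simp add: set_integrable_def)
    show "AE t in lebesgue. norm (indicator {0..2*pi} t *\<^sub>R \<phi> t) \<le> norm (indicator {0..2*pi} t *\<^sub>R M)"
      using bd M by (intro AE_I2) (auto simp: indicator_def)
  qed (use m\<phi> in \<open>intro borel_measurable_scaleR borel_measurable_indicator, auto\<close>)
  moreover have "\<delta> / (3 * M + 1) > 0" using \<open>\<delta> > 0\<close> M by simp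
  ultimately obtain \<sigma> where \<sigma>: "simple_function lebesgue \<sigma>"
    and L1: "(\<integral>\<^sup>+ t. ennreal (norm (indicator {0..2*pi} t *\<^sub>R \<phi> t - \<sigma> t)) \<partial>lebesgue) < ennreal (\<delta> / (3 * M + 1))"
    by (rule integrable_simple_function_approx)
  have "period_sqnorm (\<lambda>t. \<phi> t - (if cmod (\<sigma> t) \<le> 2*M then \<sigma> t else 0)) \<le>
      ennreal (3 * M) * ennreal (\<delta> / (3 * M + 1))"
    using order_trans[OF period_sqnorm_minus_truncation_le[OF m\<phi> borel_measurable_simple_function[OF \<sigma>] bd]
        mult_left_mono[OF less_imp_le[OF L1]]]
    by simp
  also have "\<dots> < ennreal \<delta>"
  proof -
    have "3 * M * (\<delta> / (3 * M + 1)) < \<delta>" using M \<open>\<delta> > 0\<close> by (simp add: field_simps)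
    then show ?thesis using M \<open>\<delta> > 0\<close> by (simp add: ennreal_lessI flip: ennreal_mult)
  qed
  moreover have "circ_approximable (\<lambda>t. if cmod (\<sigma> t) \<le> 2*M then \<sigma> t else 0)"
    using circ_approximable_simple_function[OF simple_function_compose[OF \<sigma>]] by (simp add: o_def)
  ultimately show "\<exists>g. circ_approximable g \<and> period_sqnorm (\<lambda>t. \<phi> t - g t) < ennreal \<delta>"
    by (meson order_le_less_trans)
qed

lemma period_sqnorm_truncation_tendsto:
  assumes "L2T F"
  shows "(\<lambda>M::nat. period_sqnorm (\<lambda>t. F (cis t) - (if cmod (F (cis t)) \<le> real M then F (cis t) else 0)))
    \<longlonglongrightarrow> 0"
proof -
  define f where "f = (\<lambda>t. F (cis t))"
  have [measurable]: "f \<in> borel_measurable lebesgue"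
    using assms by (simp add: L2T_def f_def)
  have [measurable]: "(\<lambda>t. cmod (f t)) \<in> borel_measurable lebesgue"
    by (rule measurable_compose[OF _ borel_measurable_continuous_onI]) (auto intro: continuous_intros)
  have [measurable]: "indicator {0..2*pi::real} \<in> borel_measurable lebesgue"
    by (rule borel_measurable_indicator) simp
  define w where "w = (\<lambda>t. indicator {0..2*pi} t * (cmod (f t))^2 :: real)"
  define u where "u = (\<lambda>(M::nat) t. indicator {0..2*pi} t * (if cmod (f t) \<le> real M then (cmod (f t))^2 else 0) :: real)"
  have iw: "integrable lebesgue w"
    using L2T_sq_integrable[OF assms] by (simp add: set_integrable_def w_def f_def)
  then have [measurable]: "w \<in> borel_measurable lebesgue" by auto
  have [measurable]: "u M \<in> borel_measurable lebesgue" for M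
    unfolding u_def by measurable
  have "(\<lambda>M. \<integral>\<^sup>+ t. norm (w t - u M t) \<partial>lebesgue) \<longlonglongrightarrow> 0"
  proof (rule nn_integral_dominated_convergence_norm[where w = w])
    show "AE t in lebesgue. norm (u M t) \<le> w t" for M
      by (intro AE_I2) (auto simp: u_def w_def indicator_def)
    show "(\<integral>\<^sup>+ t. ennreal (w t) \<partial>lebesgue) < \<infinity>"
      using nn_integral_eq_integral[OF iw] by (simp add: w_def)
    show "AE t in lebesgue. (\<lambda>M. u M t) \<longlonglongrightarrow> w t"
    proof (intro AE_I2 tendsto_eventually)
      fix t
      show "eventually (\<lambda>M. u M t = w t) sequentially"
        using eventually_ge_at_top[of "nat \<lceil>cmod (f t)\<rceil>"]
      proof eventually_elim
        case (elim M)
        then have "cmod (f t) \<le> real M" using real_nat_ceiling_ge[of "cmod (f t)"] by linarith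
        then show ?case by (simp add: u_def w_def)
      qed
    qed
  qed auto
  moreover have "period_sqnorm (\<lambda>t. F (cis t) - (if cmod (F (cis t)) \<le> real M then F (cis t) else 0)) =
      (\<integral>\<^sup>+ t. norm (w t - u M t) \<partial>lebesgue)" for M
    unfolding period_sqnorm_def by (intro nn_integral_cong) (auto simp: u_def w_def f_def indicator_def)
  ultimately show ?thesis by simp
qed

lemma circ_approximable_L2T:
  assumes "L2T F" shows "circ_approximable (\<lambda>t. F (cis t))"
proof (rule circ_approximable_limit)
  have mF [measurable]: "(\<lambda>t. F (cis t)) \<in> borel_measurable lebesgue"
    using assms by (simp add: L2T_def)
  then show "(\<lambda>t. F (cis t)) \<in> borel_measurable lebesgue" .
  fix \<delta> :: real assume "\<delta> > 0"
  then obtain M :: nat where M: "period_sqnorm (\<lambda>t. F (cis t) -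
      (if cmod (F (cis t)) \<le> real M then F (cis t) else 0)) < ennreal \<delta>"
    using order_tendstoD(2)[OF period_sqnorm_truncation_tendsto[OF assms], of "ennreal \<delta>"]
    by (auto simp: eventually_sequentially)
  have "circ_approximable (\<lambda>t. if cmod (F (cis t)) \<le> real M then F (cis t) else 0)"
  proof (rule circ_approximable_bounded[where M = M])
    have "(\<lambda>t. cmod (F (cis t))) \<in> borel_measurable lebesgue"
      by (rule measurable_compose[OF mF borel_measurable_continuous_onI]) (auto intro: continuous_intros)
    then show "(\<lambda>t. if cmod (F (cis t)) \<le> real M then F (cis t) else 0) \<in> borel_measurable lebesgue"
      by measurable
  qed simp
  then show "\<exists>g. circ_approximable g \<and> period_sqnorm (\<lambda>t. F (cis t) - g t) < ennreal \<delta>"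
    using M by blast
qed

theorem L2T_trig_poly_dense:
  assumes "L2T F" "\<epsilon> > 0"
  obtains p where "trig_poly p" "circ_sqnorm (\<lambda>z. F z - p z) < \<epsilon>"
proof -
  obtain \<psi> where \<psi>: "continuous_on (sphere 0 1) \<psi>" "period_sqnorm (\<lambda>t. F (cis t) - \<psi> (cis t)) < ennreal (\<epsilon>/4)"
    using circ_approximableD[OF circ_approximable_L2T[OF assms(1)], of "\<epsilon>/4"] assms(2) by auto
  define \<eta> where "\<eta> = min 1 (\<epsilon> / (16 * pi))"
  have \<eta>: "0 < \<eta>" "\<eta> \<le> 1" using assms(2) by (auto simp: \<eta>_def)
  have "2 * pi * \<eta> \<le> 2 * pi * (\<epsilon> / (16 * pi))" by (intro mult_left_mono) (auto simp: \<eta>_def)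
  then have \<eta>3: "2 * pi * \<eta> \<le> \<epsilon>/8" by simp
  obtain g where g: "polynomial_function g" "\<forall>z\<in>sphere 0 1. norm (\<psi> z - g z) < \<eta>"
    using Stone_Weierstrass_polynomial_function[OF compact_sphere \<psi>(1) \<eta>(1)] by blast
  have gL: "L2T g" using g(1) by (intro L2T_trig_poly trig_poly_polynomial_function)
  have "period_sqnorm (\<lambda>t. \<psi> (cis t) - g (cis t)) \<le> ennreal (2 * pi * \<eta>^2)"
    using g(2) by (intro period_sqnorm_le_uniform) (auto intro: less_imp_le)
  also have "\<dots> < ennreal (\<epsilon>/4)"
  proof (intro ennreal_lessI)
    have "2 * pi * \<eta>^2 \<le> 2 * pi * \<eta>"
      using \<eta> by (intro mult_left_mono) (auto simp: power2_eq_square mult_le_one)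
    then show "2 * pi * \<eta>^2 < \<epsilon>/4" using \<eta>3 assms(2) by linarith
  qed (use assms(2) in auto)
  finally have "period_sqnorm (\<lambda>t. \<psi> (cis t) - g (cis t)) < ennreal (\<epsilon>/4)" .
  moreover have "(\<lambda>t. F (cis t)) \<in> borel_measurable lebesgue" "(\<lambda>t. g (cis t)) \<in> borel_measurable lebesgue"
    using assms(1) gL by (simp_all add: L2T_def)
  ultimately have "period_sqnorm (\<lambda>t. F (cis t) - g (cis t)) < ennreal \<epsilon>"
    using period_sqnorm_triangle_less continuous_on_sphere_cis_measurable[OF \<psi>(1)] \<psi>(2) by blast
  then have "circ_sqnorm (\<lambda>z. F z - g z) < \<epsilon>"
    using period_sqnorm_circ[OF L2T_diff[OF assms(1) gL]] circ_sqnorm_nonneg assms(2)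
    by (simp add: ennreal_less_iff)
  then show ?thesis using that g(1) trig_poly_polynomial_function by blast
qed

section \<open>The mean of a product of two \<open>H\<^sup>2\<close> functions\<close>

lemma circ_sqnorm_circ_cong: "(\<And>z. cmod z = 1 \<Longrightarrow> f z = g z) \<Longrightarrow> circ_sqnorm f = circ_sqnorm g"
  by (simp add: circ_sqnorm_def)

lemma circ_sqnorm_diff_orth:
  assumes "L2T f" "L2T g" "ipL2 g f = 0"
  shows "circ_sqnorm (\<lambda>z. f z - g z) = circ_sqnorm f + circ_sqnorm g"
proof -
  have "ipL2 (\<lambda>z. f z - g z) (\<lambda>z. f z - g z) = ipL2 f f - ipL2 f g - ipL2 g f + ipL2 g g"
    using assms(1,2) by (simp add: ipL2_diff_left ipL2_diff_right L2T_diff)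
  also have "\<dots> = ipL2 f f + ipL2 g g"
    using assms(3) ipL2_cnj[of f g] by simp
  finally show ?thesis by (simp add: ipL2_self flip: of_real_add add_divide_distrib)
qed

text \<open>Pythagoras: the discarded frequencies \<open>n \<le> 0\<close> are orthogonal to what remains of \<open>F\<close>
  after subtracting the kept ones.\<close>

lemma H2_approx_by_positive_frequencies:
  assumes F: "F \<in> H2" "val0 F = 0" and N: "finite N"
  shows "circ_sqnorm (\<lambda>z. F z - (\<Sum>n\<in>{n\<in>N. 0 < n}. a n * z powi n)) \<le>
         circ_sqnorm (\<lambda>z. F z - (\<Sum>n\<in>N. a n * z powi n))"
proof -
  define q where "q = (\<lambda>z. \<Sum>n\<in>{n\<in>N. n \<le> 0}. a n * z powi n)"
  define r where "r = (\<lambda>z. \<Sum>n\<in>{n\<in>N. 0 < n}. a n * z powi n)"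
  have fin: "finite {n\<in>N. n \<le> 0}" "finite {n\<in>N. 0 < n}" using N by auto
  have FL: "L2T F" and qL: "L2T q" and rL: "L2T r"
    using F fin by (auto simp: q_def r_def intro: H2_L2T L2T_sum_powi)
  have "fourier_coeff F n = 0" if "n \<le> 0" for n
    using F that H2_fourier_coeff_neg[of F n] by (cases "n = 0") (auto simp: val0_def)
  then have "ipL2 q F = 0"
    unfolding q_def using fin FL by (intro ipL2_sum_powi_left_eq_0) auto
  moreover have "ipL2 q r = 0"
    unfolding q_def using fin rL
    by (intro ipL2_sum_powi_left_eq_0) (auto simp: r_def fourier_coeff_sum_powi)
  ultimately have "ipL2 q (\<lambda>z. F z - r z) = 0"
    using FL qL rL by (simp add: ipL2_diff_right)
  then have "circ_sqnorm (\<lambda>z. (F z - r z) - q z) = circ_sqnorm (\<lambda>z. F z - r z) + circ_sqnorm q"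
    using FL qL rL by (intro circ_sqnorm_diff_orth) auto
  moreover have "circ_sqnorm (\<lambda>z. (F z - r z) - q z) = circ_sqnorm (\<lambda>z. F z - (\<Sum>n\<in>N. a n * z powi n))"
  proof (rule circ_sqnorm_circ_cong)
    fix z :: complex
    have "(\<Sum>n\<in>N. a n * z powi n) = (\<Sum>n\<in>{n\<in>N. n \<le> 0} \<union> {n\<in>N. 0 < n}. a n * z powi n)"
      by (rule sum.cong) auto
    also have "\<dots> = q z + r z"
      unfolding q_def r_def using fin by (rule sum.union_disjoint) auto
    finally show "F z - r z - q z = F z - (\<Sum>n\<in>N. a n * z powi n)" by simp
  qed
  ultimately show ?thesis using circ_sqnorm_nonneg[of q] by (simp add: r_def)
qed

lemma H2_approx_by_analytic_poly:
  assumes F: "F \<in> H2" "val0 F = 0" and "\<epsilon> > 0"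
  obtains N a where "finite N" "N \<subseteq> {0<..}"
    "circ_sqnorm (\<lambda>z. F z - (\<Sum>n\<in>N. a n * z powi n)) < \<epsilon>"
proof -
  obtain p where "trig_poly p" and p: "circ_sqnorm (\<lambda>z. F z - p z) < \<epsilon>"
    by (rule L2T_trig_poly_dense[OF H2_L2T[OF F(1)] \<open>\<epsilon> > 0\<close>])
  obtain N a where N: "finite N" and "\<And>z. cmod z = 1 \<Longrightarrow> p z = (\<Sum>n\<in>N. a n * z powi n)"
    using trig_poly_sum_powi[OF \<open>trig_poly p\<close>] by blast
  then have "circ_sqnorm (\<lambda>z. F z - p z) = circ_sqnorm (\<lambda>z. F z - (\<Sum>n\<in>N. a n * z powi n))"
    by (intro circ_sqnorm_circ_cong) simp
  then have "circ_sqnorm (\<lambda>z. F z - (\<Sum>n\<in>{n\<in>N. 0 < n}. a n * z powi n)) < \<epsilon>"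
    using H2_approx_by_positive_frequencies[OF F N, of a] p by linarith
  then show ?thesis using N by (intro that[of "{n\<in>N. 0 < n}" a]) auto
qed

text \<open>This is where density of the trigonometric polynomials enters: \<open>F\<close> is approximated by
  polynomials in \<open>z\<close> without constant term, which are orthogonal to \<open>cnj G\<close>.\<close>

lemma ipL2_cnj_H2_eq_0:
  assumes F: "F \<in> H2" "val0 F = 0" and G: "G \<in> H2"
  shows "ipL2 F (\<lambda>z. cnj (G z)) = 0"
proof -
  have FL: "L2T F" and GcL: "L2T (\<lambda>z. cnj (G z))" using F G by (auto intro: H2_L2T)
  have "cmod (ipL2 F (\<lambda>z. cnj (G z))) \<le> \<eta>" if "\<eta> > 0" for \<eta>
  proof -
    define s where "s = (circ_sqnorm G + 1) / \<eta>"
    have s: "s > 0" using that circ_sqnorm_nonneg[of G] by (simp add: s_def)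
    then have "\<eta> / s > 0" using that by simp
    then obtain N a where N: "finite N" "N \<subseteq> {0<..}"
      and E: "circ_sqnorm (\<lambda>z. F z - (\<Sum>n\<in>N. a n * z powi n)) < \<eta> / s"
      by (rule H2_approx_by_analytic_poly[OF F])
    define r where "r = (\<lambda>z. \<Sum>n\<in>N. a n * z powi n)"
    have rL: "L2T r" using N by (simp add: r_def L2T_sum_powi)
    have "ipL2 r (\<lambda>z. cnj (G z)) = 0"
      unfolding r_def using N GcL
      by (intro ipL2_sum_powi_left_eq_0) (auto simp: fourier_coeff_cnj H2_fourier_coeff_neg[OF G])
    then have "ipL2 F (\<lambda>z. cnj (G z)) = ipL2 (\<lambda>z. F z - r z) (\<lambda>z. cnj (G z))"
      using FL rL GcL by (simp add: ipL2_diff_left)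
    also have "cmod \<dots> \<le> (s * circ_sqnorm (\<lambda>z. F z - r z) + circ_sqnorm G / s) / (4*pi)"
      using norm_ipL2_le[OF L2T_diff[OF FL rL] GcL s] by (simp add: circ_sqnorm_cnj)
    also have "\<dots> \<le> (\<eta> + \<eta>) / (4*pi)"
    proof (intro divide_right_mono add_mono)
      show "s * circ_sqnorm (\<lambda>z. F z - r z) \<le> \<eta>" using E s by (simp add: r_def field_simps)
      show "circ_sqnorm G / s \<le> \<eta>" using that circ_sqnorm_nonneg[of G] by (simp add: s_def field_simps)
    qed simp
    also have "\<dots> \<le> \<eta>" using that pi_gt3 by (simp add: field_simps)
    finally show ?thesis .
  qed
  then have "cmod (ipL2 F (\<lambda>z. cnj (G z))) \<le> 0"
    by (rule field_le_epsilon) simp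
  then show ?thesis by simp
qed

theorem ipL2_cnj_H2:
  assumes "F \<in> H2" "G \<in> H2"
  shows "ipL2 F (\<lambda>z. cnj (G z)) = val0 F * val0 G"
proof -
  have GcL: "L2T (\<lambda>z. cnj (G z))" using assms(2) by (auto intro: H2_L2T)
  have "ipL2 F (\<lambda>z. cnj (G z)) = ipL2 (\<lambda>z. F z - val0 F) (\<lambda>z. cnj (G z)) + ipL2 (\<lambda>z. val0 F * 1) (\<lambda>z. cnj (G z))"
    using assms GcL by (subst ipL2_add_left[symmetric]) (auto intro: H2_L2T)
  also have "ipL2 (\<lambda>z. F z - val0 F) (\<lambda>z. cnj (G z)) = 0"
    using assms by (intro ipL2_cnj_H2_eq_0) (auto simp: val0_diff_const)
  also have "ipL2 (\<lambda>z. val0 F * 1) (\<lambda>z. cnj (G z)) = val0 F * val0 G"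
    using ipL2_cmult_left[of "val0 F" "\<lambda>z. 1"] ipL2_one_left[OF GcL] fourier_coeff_cnj[of G 0]
    by (simp add: val0_def)
  finally show ?thesis by simp
qed

section \<open>Multipliers between model spaces\<close>

lemma const_in_Kmod:
  assumes "inner_fun \<theta>" "val0 \<theta> = 0"
  shows "(\<lambda>z. 1) \<in> Kmod \<theta>"
  unfolding Kmod_def
proof (intro CollectI conjI ballI H2_const)
  fix h assume h: "h \<in> H2"
  have "ipL2 (\<lambda>z. \<theta> z * h z) (\<lambda>z. 1) = ipL2 \<theta> (\<lambda>z. cnj (h z))"
    by (rule ipL2_circ_cong) simp
  also have "\<dots> = 0" using ipL2_cnj_H2[OF inner_fun_H2[OF assms(1)] h] assms(2) by simp
  finally show "ipL2 (\<lambda>z. 1) (\<lambda>z. \<theta> z * h z) = 0" by (subst ipL2_cnj) simp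
qed

lemma multiplier_mult_in_Kmod: "multiplier g \<theta> \<omega> \<Longrightarrow> f \<in> Kmod \<theta> \<Longrightarrow> (\<lambda>z. g z * f z) \<in> Kmod \<omega>"
  unfolding multiplier_def by blast

lemma multiplier_in_Kmod:
  assumes "multiplier g \<theta> \<omega>" "inner_fun \<theta>" "val0 \<theta> = 0"
  shows "g \<in> Kmod \<omega>"
  using multiplier_mult_in_Kmod[OF assms(1) const_in_Kmod[OF assms(2,3)]] by simp

lemma multiplier_inner_mult_H2:
  assumes "multiplier g \<theta> \<omega>" "inner_fun \<theta>" "val0 \<theta> = 0"
  shows "(\<lambda>z. \<theta> z * g z) \<in> H2"
proof (rule H2_circ_cong)
  have "(\<lambda>z. g z * (cnj z * \<theta> z)) \<in> Kmod \<omega>"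
    using multiplier_mult_in_Kmod[OF assms(1) cnj_z_mult_inner_in_Kmod[OF assms(2,3)]] .
  then show "(\<lambda>z. z * (g z * (cnj z * \<theta> z))) \<in> H2" by (intro H2_mult_z Kmod_H2)
  show "z * (g z * (cnj z * \<theta> z)) = \<theta> z * g z" if "cmod z = 1" for z
    using mult_cnj_eq_1[OF that] by (simp add: algebra_simps)
qed

lemma ipL2_inner_mult_multiplier:
  assumes \<theta>: "inner_fun \<theta>" and \<omega>: "inner_fun \<omega>" and "g \<in> H2" "g1 \<in> H2"
    and g: "aeq g (\<lambda>z. \<omega> z * cnj (\<theta> z) * cnj (g1 z))" and h: "h \<in> H2"
  shows "ipL2 (\<lambda>z. \<theta> z * g z) (\<lambda>z. \<omega> z * h z) = cnj (val0 g1 * val0 h)"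
proof -
  have "ipL2 (\<lambda>z. \<theta> z * g z) (\<lambda>z. \<omega> z * h z) = ipL2 (\<lambda>z. cnj (h z)) g1"
  proof (rule ipL2_ae_cong)
    show "circ_measurable (\<lambda>z. \<theta> z * g z)" "circ_measurable (\<lambda>z. \<omega> z * h z)"
      "circ_measurable (\<lambda>z. cnj (h z))" "circ_measurable g1"
      using inner_fun_circ_measurable[OF \<theta>] inner_fun_circ_measurable[OF \<omega>] assms(3,4) h
      by (auto intro: L2T_circ_measurable H2_L2T)
    show "circ_ae (\<lambda>z. \<theta> z * g z * cnj (\<omega> z * h z) = cnj (h z) * cnj (g1 z))"
      using circ_ae_conj[OF inner_fun_unimodular[OF \<theta>]
          circ_ae_conj[OF inner_fun_unimodular[OF \<omega>] g[unfolded aeq_def]]]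
    proof (rule circ_ae_mono)
      fix z assume "\<theta> z * cnj (\<theta> z) = 1 \<and> \<omega> z * cnj (\<omega> z) = 1 \<and> g z = \<omega> z * cnj (\<theta> z) * cnj (g1 z)"
      then show "\<theta> z * g z * cnj (\<omega> z * h z) = cnj (h z) * cnj (g1 z)"
        by (metis (no_types, lifting) complex_cnj_mult mult.assoc mult.commute mult.left_commute mult_1)
    qed
  qed
  also have "\<dots> = cnj (ipL2 g1 (\<lambda>z. cnj (h z)))" by (rule ipL2_cnj)
  also have "\<dots> = cnj (val0 g1 * val0 h)" using ipL2_cnj_H2[OF \<open>g1 \<in> H2\<close> h] by simp
  finally show ?thesis .
qed

lemma ipL2_multiplier_mult_cnj_z_inner:
  assumes \<theta>: "inner_fun \<theta>" and \<omega>: "inner_fun \<omega>" and "g \<in> H2" and g1: "g1 \<in> H2"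
    and g: "aeq g (\<lambda>z. \<omega> z * cnj (\<theta> z) * cnj (g1 z))" and f: "f \<in> Kmod \<theta>"
  shows "ipL2 (\<lambda>z. g z * f z) (\<lambda>w. cnj w * \<omega> w) = cnj (val0 g1) * ipL2 f (\<lambda>w. cnj w * \<theta> w)"
proof -
  have fL: "L2T f" and g1L: "L2T g1" using f g1 by (auto intro: Kmod_L2T H2_L2T)
  have "ipL2 (\<lambda>z. g z * f z) (\<lambda>w. cnj w * \<omega> w) = ipL2 f (\<lambda>z. cnj z * \<theta> z * g1 z)"
  proof (rule ipL2_ae_cong)
    show "circ_measurable (\<lambda>z. g z * f z)" "circ_measurable (\<lambda>w. cnj w * \<omega> w)" "circ_measurable f"
      "circ_measurable (\<lambda>z. cnj z * \<theta> z * g1 z)"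
      using inner_fun_circ_measurable[OF \<theta>] inner_fun_circ_measurable[OF \<omega>] assms(3) fL g1L
        circ_measurable_cnj[OF circ_measurable_id]
      by (auto intro: L2T_circ_measurable H2_L2T)
    show "circ_ae (\<lambda>z. g z * f z * cnj (cnj z * \<omega> z) = f z * cnj (cnj z * \<theta> z * g1 z))"
      using circ_ae_conj[OF inner_fun_unimodular[OF \<omega>] g[unfolded aeq_def]]
    proof (rule circ_ae_mono)
      fix z assume "\<omega> z * cnj (\<omega> z) = 1 \<and> g z = \<omega> z * cnj (\<theta> z) * cnj (g1 z)"
      then show "g z * f z * cnj (cnj z * \<omega> z) = f z * cnj (cnj z * \<theta> z * g1 z)"
        by (metis (no_types, lifting) complex_cnj_cnj complex_cnj_mult mult.assoc mult.commute mult.left_commute mult_1)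
    qed
  qed
  also have "\<dots> = ipL2 f (\<lambda>z. \<theta> z * (cnj z * (g1 z - val0 g1)) + val0 g1 * (cnj z * \<theta> z))"
    by (rule ipL2_circ_cong) (simp add: algebra_simps)
  also have "\<dots> = ipL2 f (\<lambda>z. \<theta> z * (cnj z * (g1 z - val0 g1))) + cnj (val0 g1) * ipL2 f (\<lambda>w. cnj w * \<theta> w)"
    using fL L2T_inner_mult[OF \<theta> H2_L2T[OF H2_backward_shift[OF g1]]]
      L2T_cmult[OF L2T_mult_cnj_z[OF H2_L2T[OF inner_fun_H2[OF \<theta>]]]]
    by (simp add: ipL2_add_right ipL2_cmult_right)
  also have "ipL2 f (\<lambda>z. \<theta> z * (cnj z * (g1 z - val0 g1))) = 0"
    using Kmod_orth[OF f H2_backward_shift[OF g1]] .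
  finally show ?thesis by simp
qed

lemma multiplier_defect_in_Kmod:
  assumes \<theta>: "inner_fun \<theta>" "val0 \<theta> = 0" and \<omega>: "inner_fun \<omega>" and m: "multiplier g \<theta> \<omega>"
    and g1: "g1 \<in> H2" and g: "aeq g (\<lambda>z. \<omega> z * cnj (\<theta> z) * cnj (g1 z))" and "val0 g1 \<noteq> 0"
  shows "(\<lambda>z. \<omega> z + (1 / cnj (val0 g1)) * (c - \<theta> z) * g z) \<in> Kmod \<omega>"
proof -
  define k where "k = 1 / cnj (val0 g1)"
  have gH: "g \<in> H2" using m by (simp add: multiplier_def)
  have \<omega>H: "\<omega> \<in> H2" using \<omega> by (rule inner_fun_H2)
  have \<theta>gH: "(\<lambda>z. \<theta> z * g z) \<in> H2" using m \<theta> by (rule multiplier_inner_mult_H2)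
  have u: "(\<lambda>z. \<omega> z + (1 / cnj (val0 g1)) * (c - \<theta> z) * g z) = (\<lambda>z. \<omega> z + (k * c) * g z - k * (\<theta> z * g z))"
    using \<open>val0 g1 \<noteq> 0\<close> by (simp add: k_def fun_eq_iff field_simps)
  show ?thesis
    unfolding u Kmod_def
  proof (intro CollectI conjI ballI)
    show "(\<lambda>z. \<omega> z + (k * c) * g z - k * (\<theta> z * g z)) \<in> H2"
      using \<omega>H gH \<theta>gH by (intro H2_diff H2_add H2_cmult)
    fix h assume h: "h \<in> H2"
    have "ipL2 \<omega> (\<lambda>z. \<omega> z * h z) = cnj (val0 h)"
      using ipL2_inner_mult[OF \<omega> L2T_const[of 1] H2_L2T[OF h]] ipL2_one_left[OF H2_L2T[OF h]] by simp
    moreover have "ipL2 g (\<lambda>z. \<omega> z * h z) = 0"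
      using Kmod_orth[OF multiplier_in_Kmod[OF m \<theta>] h] .
    moreover have "ipL2 (\<lambda>z. \<theta> z * g z) (\<lambda>z. \<omega> z * h z) = cnj (val0 g1 * val0 h)"
      using ipL2_inner_mult_multiplier[OF \<theta>(1) \<omega> gH g1 g h] .
    moreover have "k * cnj (val0 g1) = 1" using \<open>val0 g1 \<noteq> 0\<close> by (simp add: k_def)
    moreover have "L2T (\<lambda>z. \<omega> z * h z)" using \<omega> H2_L2T[OF h] by (rule L2T_inner_mult)
    ultimately show "ipL2 (\<lambda>z. \<omega> z + k * c * g z - k * (\<theta> z * g z)) (\<lambda>z. \<omega> z * h z) = 0"
      using \<omega>H gH \<theta>gH
      by (simp add: ipL2_diff_left ipL2_add_left ipL2_cmult_left H2_L2T L2T_cmult L2T_add algebra_simps)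
  qed
qed

lemma multiplier_intertwines:
  assumes \<theta>: "inner_fun \<theta>" "val0 \<theta> = 0" and \<omega>: "inner_fun \<omega>" and m: "multiplier g \<theta> \<omega>"
    and g1: "g1 \<in> H2" and g: "aeq g (\<lambda>z. \<omega> z * cnj (\<theta> z) * cnj (g1 z))" and "val0 g1 \<noteq> 0"
    and f: "f \<in> Kmod \<theta>"
  shows "aeq (\<lambda>z. g z * Uc \<theta> c f z)
    (\<lambda>z. Sc \<omega> (\<lambda>z. g z * f z) z + ipL2 (\<lambda>z. g z * f z) (\<lambda>w. cnj w * \<omega> w) *
          (\<omega> z + (1 / cnj (val0 g1)) * (c - \<theta> z) * g z))"
proof -
  define a where "a = ipL2 f (\<lambda>w. cnj w * \<theta> w)"
  have gf: "(\<lambda>z. g z * f z) \<in> Kmod \<omega>" using m f by (rule multiplier_mult_in_Kmod)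
  have b: "ipL2 (\<lambda>z. g z * f z) (\<lambda>w. cnj w * \<omega> w) = cnj (val0 g1) * a"
    using m by (simp add: a_def multiplier_def ipL2_multiplier_mult_cnj_z_inner[OF \<theta>(1) \<omega> _ g1 g f])
  have "cnj (val0 g1) \<noteq> 0" using \<open>val0 g1 \<noteq> 0\<close> by simp
  show ?thesis
    using circ_ae_conj[OF Sc_ae_eq[OF \<theta>(1) f, unfolded aeq_def] Sc_ae_eq[OF \<omega> gf, unfolded aeq_def]]
    unfolding aeq_def b
  proof (rule circ_ae_mono)
    fix z
    assume "Sc \<theta> f z = z * f z - ipL2 f (\<lambda>w. cnj w * \<theta> w) * \<theta> z \<and>
        Sc \<omega> (\<lambda>z. g z * f z) z = z * (g z * f z) - cnj (val0 g1) * a * \<omega> z"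
    then have S\<theta>: "Sc \<theta> f z = z * f z - a * \<theta> z"
      and S\<omega>: "Sc \<omega> (\<lambda>z. g z * f z) z = z * (g z * f z) - cnj (val0 g1) * a * \<omega> z"
      by (simp_all add: a_def)
    show "g z * Uc \<theta> c f z = Sc \<omega> (\<lambda>z. g z * f z) z +
        cnj (val0 g1) * a * (\<omega> z + 1 / cnj (val0 g1) * (c - \<theta> z) * g z)"
      unfolding Uc_def a_def[symmetric] S\<theta> S\<omega> using \<open>cnj (val0 g1) \<noteq> 0\<close> by (simp add: field_simps)
  qed
qed

theorem theorem3p6:
  fixes \<theta> \<omega> g g1 :: "complex \<Rightarrow> complex" and c :: complex
  assumes "inner_fun \<theta>" and "inner_fun \<omega>"
    and "val0 \<theta> = 0" and "val0 \<omega> = 0"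
    and "multiplier g \<theta> \<omega>"
    and "g1 \<in> H2" and "aeq g (\<lambda>z. \<omega> z * cnj (\<theta> z) * cnj (g1 z))"
    and "val0 g1 \<noteq> 0"
    and "cmod c = 1"
  defines "u \<equiv> (\<lambda>z. \<omega> z + (1 / cnj (val0 g1)) * (c - \<theta> z) * g z)"
  defines "X \<equiv> (\<lambda>f z. g z * f z)"
  defines "T \<equiv> (\<lambda>f z. Sc \<omega> f z + ipL2 f (\<lambda>w. cnj w * \<omega> w) * u z)"
  shows "u \<in> Kmod \<omega> \<and> (\<forall>f\<in>Kmod \<theta>. aeq (X (Uc \<theta> c f)) (T (X f)))"
proof -
  show ?thesis
    unfolding u_def X_def T_def
    using multiplier_defect_in_Kmod[OF assms(1,3,2,5-8)] multiplier_intertwines[OF assms(1,3,2,5-8)]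
    by blast
qed

end
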